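(* Let $\mathcal T,\mathcal A,\mathcal B,\mathcal C$ be 4-PI operators as below, and assume the auxiliary PIE and the dual auxiliary PIE are well-posed. Suppose there exist $\gamma>0$ and a 4-PI operator $\mathcal Q:\mathbb{R}L_2^{m,n}[a,b]\to\mathbb{R}L_2^{m,n}[a,b]$ with $\mathcal Q\succeq0$ such that one of the following holds: (i) $\mathcal B^*\mathcal Q\mathcal B\preceq I$, $\ \mathcal A^*\mathcal Q\mathcal T+\mathcal T^*\mathcal Q\mathcal A\preceq0$, $\ \frac{1}{\gamma^2}\mathcal C^*\mathcal C\preceq\mathcal T^*\mathcal Q\mathcal T$; (ii) $\mathcal C\mathcal Q\mathcal C^*\preceq I$, $\ \mathcal A\mathcal Q\mathcal T^*+\mathcal T\mathcal Q\mathcal A^*\preceq0$, $\ \frac{1}{\gamma^2}\mathcal B\mathcal B^*\preceq\mathcal T\mathcal Q\mathcal T^*$. Then $\|G(\mathcal T,\mathcal A,\mathcal B,\mathcal C)\|_{ip}\le\gamma$.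
   Context: Notation: $\mathbb{R}L_2^{m,n}[a,b]:=\mathbb{R}^m\times L_2^n[a,b]$, the Hilbert space with inner product $\langle (x,\mathbf x),(y,\mathbf y)\rangle=x^\top y+\int_a^b \mathbf x(s)^\top\mathbf y(s)\,ds$. Finite-dimensional spaces $\mathbb{R}^k$ carry the Euclidean inner product and norm, and are identified with $\mathbb{R}L_2^{k,0}$. $\mathcal P^*$ denotes the Hilbert adjoint. For a bounded operator $\mathcal P$ on a Hilbert space $H$, $\mathcal P\succeq0$ means $\mathcal P$ is self-adjoint and $\langle h,\mathcal Ph\rangle\ge0$ for all $h\in H$; $\mathcal P\preceq\mathcal R$ means $\mathcal R-\mathcal P\succeq0$; $I$ is the identity. A 4-PI operator $\mathcal P:\mathbb{R}L_2^{m_1,n_1}[a,b]\to\mathbb{R}L_2^{m_2,n_2}[a,b]$ is one of the form $$\mathcal P\begin{bmatrix}x\\ \mathbf x\end{bmatrix}(s)=\begin{bmatrix}Px+\int_a^b Q_1(\theta)\mathbf x(\theta)\,d\theta\\ Q_2(s)x+R_0(s)\mathbf x(s)+\int_a^s R_1(s,\theta)\mathbf x(\theta)\,d\theta+\int_s^b R_2(s,\theta)\mathbf x(\theta)\,d\theta\end{bmatrix},$$ with $P$ a real matrix and $Q_1,Q_2,R_0,R_1,R_2$ real matrix-valued polynomials. Here $\mathcal T,\mathcal A:\mathbb{R}L_2^{m,n}[a,b]\to\mathbb{R}L_2^{m,n}[a,b]$, $\mathcal B:\mathbb{R}^{n_w}\to\mathbb{R}L_2^{m,n}[a,b]$, $\mathcal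 C:\mathbb{R}L_2^{m,n}[a,b]\to\mathbb{R}^{n_z}$ are 4-PI operators. Auxiliary PIE: given $v\in\mathbb{R}^{n_w}$, a solution is a continuously differentiable $\mathbf x:[0,\infty)\to\mathbb{R}L_2^{m,n}[a,b]$ with $\frac{d}{dt}(\mathcal T\mathbf x(t))=\mathcal A\mathbf x(t)$ for all $t\ge0$, $\mathcal T\mathbf x(0)=\mathcal Bv$, and output $z(t)=\mathcal C\mathbf x(t)$; it is well-posed if for each $v$ a unique solution exists. Dual auxiliary PIE: given $\bar v\in\mathbb{R}^{n_z}$, a solution is a continuously differentiable $\bar{\mathbf x}:[0,\infty)\to\mathbb{R}L_2^{m,n}[a,b]$ with $\frac{d}{dt}(\mathcal T^*\bar{\mathbf x}(t))=\mathcal A^*\bar{\mathbf x}(t)$, $\mathcal T^*\bar{\mathbf x}(0)=\mathcal C^*\bar v$, output $\bar z(t)=\mathcal B^*\bar{\mathbf x}(t)$; well-posed analogously. Impulse-to-peak norm: $\|G(\mathcal T,\mathcal A,\mathcal B,\mathcal C)\|_{ip}:=\sup\{\sup_{t\ge0}\|z(t)\|:\|v\|=1,\ z\text{ output of a solution of the auxiliary PIE with data }v\}$. *)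

theory Defs
  imports "HOL-Analysis.Analysis" "HOL-Computational_Algebra.Polynomial" "Jordan_Normal_Form.Matrix"
begin

text \<open>An element of RL2^{m,n}[a,b] is represented by a pair (x, f) with x a real vector of
dimension m and f a function on the reals whose values on [a,b] are real vectors of dimension n,
each component being Lebesgue measurable and square integrable on [a,b]. Values outside [a,b]
are irrelevant. R^k is identified with RL2^{k,0}[a,b].\<close>

type_synonym rl2 = "real vec \<times> (real \<Rightarrow> real vec)"

definition in_RL2 :: "real \<Rightarrow> real \<Rightarrow> nat \<Rightarrow> nat \<Rightarrow> rl2 \<Rightarrow> bool" where
  "in_RL2 a b m n u \<longleftrightarrow>
     fst u \<in> carrier_vec m \<and> (\<forall>s\<in>{a..b}. snd u s \<in> carrier_vec n) \<and>
     (\<forall>i<n. set_borel_measurable lborel {a..b} (\<lambda>s. vec_index (snd u s) i) \<and>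
            set_integrable lborel {a..b} (\<lambda>s. (vec_index (snd u s) i)^2))"

definition RL2 :: "real \<Rightarrow> real \<Rightarrow> nat \<Rightarrow> nat \<Rightarrow> rl2 set" where
  "RL2 a b m n = {u. in_RL2 a b m n u}"

definition rl2_inner :: "real \<Rightarrow> real \<Rightarrow> rl2 \<Rightarrow> rl2 \<Rightarrow> real" where
  "rl2_inner a b u v = scalar_prod (fst u) (fst v) +
     (LINT s:{a..b}|lborel. scalar_prod (snd u s) (snd v s))"

definition rl2_norm :: "real \<Rightarrow> real \<Rightarrow> rl2 \<Rightarrow> real" where
  "rl2_norm a b u = sqrt (rl2_inner a b u u)"

definition rl2_add :: "rl2 \<Rightarrow> rl2 \<Rightarrow> rl2" where
  "rl2_add u v = (fst u + fst v, \<lambda>s. snd u s + snd v s)"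

definition rl2_sub :: "rl2 \<Rightarrow> rl2 \<Rightarrow> rl2" where
  "rl2_sub u v = (fst u - fst v, \<lambda>s. snd u s - snd v s)"

definition rl2_scale :: "real \<Rightarrow> rl2 \<Rightarrow> rl2" where
  "rl2_scale c u = (smult_vec c (fst u), \<lambda>s. smult_vec c (snd u s))"

definition rl2_dist :: "real \<Rightarrow> real \<Rightarrow> rl2 \<Rightarrow> rl2 \<Rightarrow> real" where
  "rl2_dist a b u v = rl2_norm a b (rl2_sub u v)"

text \<open>Data of a 4-PI operator: a real matrix P and matrix-valued polynomials Q1, Q2, R0
(univariate, entries of type real poly) and R1, R2 (bivariate in (s,theta); an entry
p :: real poly poly denotes the polynomial function (s,theta) |-> poly (poly p [:theta:]) s).\<close>

record pi4 =
  pi_P  :: "real mat"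
  pi_Q1 :: "real poly mat"
  pi_Q2 :: "real poly mat"
  pi_R0 :: "real poly mat"
  pi_R1 :: "real poly poly mat"
  pi_R2 :: "real poly poly mat"

definition eval1 :: "real poly mat \<Rightarrow> real \<Rightarrow> real mat" where
  "eval1 M s = map_mat (\<lambda>p. poly p s) M"

definition eval2 :: "real poly poly mat \<Rightarrow> real \<Rightarrow> real \<Rightarrow> real mat" where
  "eval2 M s \<theta> = map_mat (\<lambda>p. poly (poly p [:\<theta>:]) s) M"

definition is_pi4 :: "nat \<Rightarrow> nat \<Rightarrow> nat \<Rightarrow> nat \<Rightarrow> pi4 \<Rightarrow> bool" where
  "is_pi4 m1 n1 m2 n2 D \<longleftrightarrow>
     pi_P D \<in> carrier_mat m2 m1 \<and> pi_Q1 D \<in> carrier_mat m2 n1 \<and>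
     pi_Q2 D \<in> carrier_mat n2 m1 \<and> pi_R0 D \<in> carrier_mat n2 n1 \<and>
     pi_R1 D \<in> carrier_mat n2 n1 \<and> pi_R2 D \<in> carrier_mat n2 n1"

definition pi_op :: "real \<Rightarrow> real \<Rightarrow> pi4 \<Rightarrow> rl2 \<Rightarrow> rl2" where
  "pi_op a b D u =
    (vec (dim_row (pi_P D)) (\<lambda>i.
        vec_index (mult_mat_vec (pi_P D) (fst u)) i +
        (LINT \<theta>:{a..b}|lborel. vec_index (mult_mat_vec (eval1 (pi_Q1 D) \<theta>) (snd u \<theta>)) i)),
     \<lambda>s. vec (dim_row (pi_R0 D)) (\<lambda>i.
        vec_index (mult_mat_vec (eval1 (pi_Q2 D) s) (fst u)) i +
        vec_index (mult_mat_vec (eval1 (pi_R0 D) s) (snd u s)) i +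
        (LINT \<theta>:{a..s}|lborel. vec_index (mult_mat_vec (eval2 (pi_R1 D) s \<theta>) (snd u \<theta>)) i) +
        (LINT \<theta>:{s..b}|lborel. vec_index (mult_mat_vec (eval2 (pi_R2 D) s \<theta>) (snd u \<theta>)) i)))"

definition is_adjoint :: "real \<Rightarrow> real \<Rightarrow> rl2 set \<Rightarrow> rl2 set \<Rightarrow> (rl2 \<Rightarrow> rl2) \<Rightarrow> (rl2 \<Rightarrow> rl2) \<Rightarrow> bool" where
  "is_adjoint a b H1 H2 F G \<longleftrightarrow>
     (\<forall>v\<in>H2. G v \<in> H1) \<and> (\<forall>u\<in>H1. \<forall>v\<in>H2. rl2_inner a b (F u) v = rl2_inner a b u (G v))"

definition op_psd :: "real \<Rightarrow> real \<Rightarrow> rl2 set \<Rightarrow> (rl2 \<Rightarrow> rl2) \<Rightarrow> bool" where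
  "op_psd a b H P \<longleftrightarrow>
     (\<forall>u\<in>H. \<forall>v\<in>H. rl2_inner a b (P u) v = rl2_inner a b u (P v)) \<and>
     (\<forall>h\<in>H. rl2_inner a b h (P h) \<ge> 0)"

definition op_le :: "real \<Rightarrow> real \<Rightarrow> rl2 set \<Rightarrow> (rl2 \<Rightarrow> rl2) \<Rightarrow> (rl2 \<Rightarrow> rl2) \<Rightarrow> bool" where
  "op_le a b H P R \<longleftrightarrow> op_psd a b H (\<lambda>u. rl2_sub (R u) (P u))"

definition op_zero :: "nat \<Rightarrow> nat \<Rightarrow> rl2 \<Rightarrow> rl2" where
  "op_zero m n u = (0\<^sub>v m, \<lambda>s. 0\<^sub>v n)"

definition has_rl2_deriv :: "real \<Rightarrow> real \<Rightarrow> (real \<Rightarrow> rl2) \<Rightarrow> rl2 \<Rightarrow> real \<Rightarrow> bool" where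
  "has_rl2_deriv a b y D t \<longleftrightarrow>
     ((\<lambda>h. rl2_norm a b (rl2_sub (rl2_scale (1 / h) (rl2_sub (y (t + h)) (y t))) D))
        \<longlongrightarrow> 0) (at 0 within {-t..})"

definition rl2_C1 :: "real \<Rightarrow> real \<Rightarrow> rl2 set \<Rightarrow> (real \<Rightarrow> rl2) \<Rightarrow> bool" where
  "rl2_C1 a b H x \<longleftrightarrow>
     (\<exists>x'. (\<forall>t\<ge>0. x t \<in> H \<and> x' t \<in> H \<and> has_rl2_deriv a b x (x' t) t) \<and>
           (\<forall>t\<ge>0. ((\<lambda>\<tau>. rl2_dist a b (x' \<tau>) (x' t)) \<longlongrightarrow> 0) (at t within {0..})))"

text \<open>Solution of d/dt (T x(t)) = A x(t), T x(0) = B v, with state space H. Equalities in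
RL2 are understood in the L2 sense (distance zero).\<close>

definition pie_solution :: "real \<Rightarrow> real \<Rightarrow> rl2 set \<Rightarrow> (rl2 \<Rightarrow> rl2) \<Rightarrow> (rl2 \<Rightarrow> rl2) \<Rightarrow>
    (rl2 \<Rightarrow> rl2) \<Rightarrow> rl2 \<Rightarrow> (real \<Rightarrow> rl2) \<Rightarrow> bool" where
  "pie_solution a b H T A B v x \<longleftrightarrow>
     rl2_C1 a b H x \<and>
     (\<forall>t\<ge>0. has_rl2_deriv a b (\<lambda>\<tau>. T (x \<tau>)) (A (x t)) t) \<and>
     rl2_dist a b (T (x 0)) (B v) = 0"

definition pie_well_posed :: "real \<Rightarrow> real \<Rightarrow> rl2 set \<Rightarrow> rl2 set \<Rightarrow> (rl2 \<Rightarrow> rl2) \<Rightarrow>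
    (rl2 \<Rightarrow> rl2) \<Rightarrow> (rl2 \<Rightarrow> rl2) \<Rightarrow> bool" where
  "pie_well_posed a b H V T A B \<longleftrightarrow>
     (\<forall>v\<in>V. (\<exists>x. pie_solution a b H T A B v x) \<and>
        (\<forall>x y. pie_solution a b H T A B v x \<and> pie_solution a b H T A B v y \<longrightarrow>
               (\<forall>t\<ge>0. rl2_dist a b (x t) (y t) = 0)))"

definition ip_norm :: "real \<Rightarrow> real \<Rightarrow> rl2 set \<Rightarrow> rl2 set \<Rightarrow> (rl2 \<Rightarrow> rl2) \<Rightarrow> (rl2 \<Rightarrow> rl2) \<Rightarrow>
    (rl2 \<Rightarrow> rl2) \<Rightarrow> (rl2 \<Rightarrow> rl2) \<Rightarrow> ereal" where
  "ip_norm a b H V T A B C =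
     (SUP p \<in> {(v, x, t). v \<in> V \<and> rl2_norm a b v = 1 \<and> pie_solution a b H T A B v x \<and> t \<ge> 0}.
        ereal (rl2_norm a b (C ((fst (snd p)) (snd (snd p))))))"

end

theory Submission
  imports Defs
begin

(*
  Both conditions are Lyapunov certificates.  Under (i), V(t) = <T x(t), Q T x(t)> is
  nonincreasing along every solution because its derivative 2 <A x, Q T x> is nonpositive;
  initially T x(0) = B v, so V(0) = <v, B* Q B v> <= |v|^2, and the output inequality gives
  |C x(t)|^2 <= gamma^2 V(t).  Condition (ii) is condition (i) for the dual PIE, and the pairing
  <T x(s), xd(t - s)> of a solution with a dual solution is constant in s, so
  |C x(t)|^2 = <v, B* xd(t)> for the dual solution xd started at C x(t); the dual bound
  |B* xd(t)| <= gamma |C x(t)| then gives the claim.  The analytic input is that 4-PI operators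
  map RL2 boundedly into RL2, which makes V continuous and differentiable along trajectories.
*)

section \<open>The inner product space RL2\<close>

definition rl2_comp :: "real \<Rightarrow> real \<Rightarrow> rl2 \<Rightarrow> nat \<Rightarrow> real \<Rightarrow> real" where
  "rl2_comp a b u i s = indicator {a..b} s * vec_index (snd u s) i"

lemma mem_RL2_iff:
  "u \<in> RL2 a b m n \<longleftrightarrow> fst u \<in> carrier_vec m \<and> (\<forall>s\<in>{a..b}. snd u s \<in> carrier_vec n) \<and>
     (\<forall>i<n. rl2_comp a b u i \<in> borel_measurable lborel \<and>
            integrable lborel (\<lambda>s. (rl2_comp a b u i s)^2))"
proof -
  have "(indicator {a..b} s * (x::real))^2 = indicator {a..b} s * x^2" for s x
    by (simp split: split_indicator)
  then show ?thesis
    unfolding RL2_def in_RL2_def rl2_comp_def set_integrable_def set_borel_measurable_def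
    by simp
qed

lemma RL2_carrier_fst: "u \<in> RL2 a b m n \<Longrightarrow> fst u \<in> carrier_vec m"
  and RL2_carrier_snd: "u \<in> RL2 a b m n \<Longrightarrow> s \<in> {a..b} \<Longrightarrow> snd u s \<in> carrier_vec n"
  and RL2_comp_measurable: "u \<in> RL2 a b m n \<Longrightarrow> i < n \<Longrightarrow> rl2_comp a b u i \<in> borel_measurable lborel"
  and RL2_comp_square_integrable:
    "u \<in> RL2 a b m n \<Longrightarrow> i < n \<Longrightarrow> integrable lborel (\<lambda>s. (rl2_comp a b u i s)^2)"
  by (simp_all add: mem_RL2_iff)

lemma rl2_comp_nonzero_imp_mem: "rl2_comp a b u i s \<noteq> 0 \<Longrightarrow> s \<in> {a..b}"
  by (auto simp: rl2_comp_def split: split_indicator_asm)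

lemma integrable_mult_if_square_integrable:
  fixes f g :: "real \<Rightarrow> real"
  assumes "f \<in> borel_measurable lborel" "g \<in> borel_measurable lborel"
    and "integrable lborel (\<lambda>s. f s^2)" "integrable lborel (\<lambda>s. g s^2)"
  shows "integrable lborel (\<lambda>s. f s * g s)"
proof (rule Bochner_Integration.integrable_bound)
  show "integrable lborel (\<lambda>s. (f s^2 + g s^2) / 2)"
    using assms by auto
  show "AE s in lborel. norm (f s * g s) \<le> norm ((f s^2 + g s^2) / 2)"
  proof (rule AE_I2)
    fix s
    have "0 \<le> (\<bar>f s\<bar> - \<bar>g s\<bar>)^2" by simp
    then show "norm (f s * g s) \<le> norm ((f s^2 + g s^2) / 2)"
      by (simp add: power2_diff abs_mult)
  qed
qed (use assms in measurable)

lemma RL2_comp_mult_integrable: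
  "u \<in> RL2 a b m n \<Longrightarrow> v \<in> RL2 a b m n \<Longrightarrow> i < n \<Longrightarrow>
     integrable lborel (\<lambda>s. rl2_comp a b u i s * rl2_comp a b v i s)"
  by (intro integrable_mult_if_square_integrable RL2_comp_measurable RL2_comp_square_integrable)

lemma scalar_prod_eq_sum:
  "v \<in> carrier_vec n \<Longrightarrow> w \<in> carrier_vec n \<Longrightarrow>
     scalar_prod v w = (\<Sum>i<n. vec_index v i * vec_index w i)"
  by (simp add: scalar_prod_def atLeast0LessThan)

lemma rl2_inner_eq_sum:
  assumes u: "u \<in> RL2 a b m n" and v: "v \<in> RL2 a b m n"
  shows "rl2_inner a b u v = (\<Sum>j<m. vec_index (fst u) j * vec_index (fst v) j) +
     (\<Sum>i<n. \<integral>s. rl2_comp a b u i s * rl2_comp a b v i s \<partial>lborel)"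
proof -
  have "indicator {a..b} s *\<^sub>R scalar_prod (snd u s) (snd v s) =
      (\<Sum>i<n. rl2_comp a b u i s * rl2_comp a b v i s)" for s
    using scalar_prod_eq_sum[OF RL2_carrier_snd[OF u] RL2_carrier_snd[OF v]]
    by (cases "s \<in> {a..b}") (simp_all add: rl2_comp_def)
  moreover have "(\<integral>s. (\<Sum>i<n. rl2_comp a b u i s * rl2_comp a b v i s) \<partial>lborel) =
      (\<Sum>i<n. \<integral>s. rl2_comp a b u i s * rl2_comp a b v i s \<partial>lborel)"
    using RL2_comp_mult_integrable[OF u v] by (intro Bochner_Integration.integral_sum) simp
  ultimately show ?thesis
    unfolding rl2_inner_def set_lebesgue_integral_def
    using scalar_prod_eq_sum[OF RL2_carrier_fst[OF u] RL2_carrier_fst[OF v]] by simp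
qed

lemma rl2_inner_self_nonneg: "rl2_inner a b u u \<ge> 0"
proof -
  have sp: "scalar_prod v v \<ge> (0::real)" for v :: "real vec"
    unfolding scalar_prod_def by (intro sum_nonneg) auto
  then show ?thesis
    unfolding rl2_inner_def set_lebesgue_integral_def
    by (intro add_nonneg_nonneg integral_nonneg_AE AE_I2 scaleR_nonneg_nonneg sp) simp
qed

lemma rl2_norm_nonneg: "rl2_norm a b u \<ge> 0"
  unfolding rl2_norm_def using rl2_inner_self_nonneg by simp

lemma rl2_norm_square: "(rl2_norm a b u)^2 = rl2_inner a b u u"
  unfolding rl2_norm_def using rl2_inner_self_nonneg by simp

lemma rl2_comp_add:
  "u \<in> RL2 a b m n \<Longrightarrow> v \<in> RL2 a b m n \<Longrightarrow> i < n \<Longrightarrow>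
     rl2_comp a b (rl2_add u v) i s = rl2_comp a b u i s + rl2_comp a b v i s"
  and rl2_comp_sub:
  "u \<in> RL2 a b m n \<Longrightarrow> v \<in> RL2 a b m n \<Longrightarrow> i < n \<Longrightarrow>
     rl2_comp a b (rl2_sub u v) i s = rl2_comp a b u i s - rl2_comp a b v i s"
  and rl2_comp_scale:
  "u \<in> RL2 a b m n \<Longrightarrow> i < n \<Longrightarrow> rl2_comp a b (rl2_scale c u) i s = c * rl2_comp a b u i s"
  by (cases "s \<in> {a..b}";
      auto simp: rl2_comp_def rl2_add_def rl2_sub_def rl2_scale_def algebra_simps
           dest!: RL2_carrier_snd[where s = s])+

lemma rl2_fst_add:
  "u \<in> RL2 a b m n \<Longrightarrow> v \<in> RL2 a b m n \<Longrightarrow> j < m \<Longrightarrow>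
     vec_index (fst (rl2_add u v)) j = vec_index (fst u) j + vec_index (fst v) j"
  and rl2_fst_sub:
  "u \<in> RL2 a b m n \<Longrightarrow> v \<in> RL2 a b m n \<Longrightarrow> j < m \<Longrightarrow>
     vec_index (fst (rl2_sub u v)) j = vec_index (fst u) j - vec_index (fst v) j"
  and rl2_fst_scale:
  "u \<in> RL2 a b m n \<Longrightarrow> j < m \<Longrightarrow> vec_index (fst (rl2_scale c u)) j = c * vec_index (fst u) j"
  by (auto simp: rl2_add_def rl2_sub_def rl2_scale_def dest!: RL2_carrier_fst)

lemma rl2_scale_closed:
  assumes u: "u \<in> RL2 a b m n"
  shows "rl2_scale c u \<in> RL2 a b m n"
proof -
  have "rl2_comp a b (rl2_scale c u) i = (\<lambda>s. c * rl2_comp a b u i s)" if "i < n" for i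
    using rl2_comp_scale[OF u that] by auto
  then show ?thesis
    using u by (auto simp: mem_RL2_iff rl2_scale_def power_mult_distrib)
qed

lemma rl2_add_closed:
  assumes u: "u \<in> RL2 a b m n" and v: "v \<in> RL2 a b m n"
  shows "rl2_add u v \<in> RL2 a b m n"
proof -
  have "rl2_comp a b (rl2_add u v) i = (\<lambda>s. rl2_comp a b u i s + rl2_comp a b v i s)"
    if "i < n" for i
    using rl2_comp_add[OF u v that] by auto
  moreover have "(x + y)^2 = x^2 + y^2 + 2 * (x * y)" for x y :: real
    by (simp add: power2_sum)
  ultimately show ?thesis
    using u v RL2_comp_mult_integrable[OF u v] by (auto simp: mem_RL2_iff rl2_add_def intro: borel_measurable_add)
qed

lemma rl2_sub_closed:
  assumes u: "u \<in> RL2 a b m n" and v: "v \<in> RL2 a b m n"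
  shows "rl2_sub u v \<in> RL2 a b m n"
proof -
  have "rl2_comp a b (rl2_sub u v) i = (\<lambda>s. rl2_comp a b u i s - rl2_comp a b v i s)"
    if "i < n" for i
    using rl2_comp_sub[OF u v that] by auto
  moreover have "(x - y)^2 = x^2 + y^2 - 2 * (x * y)" for x y :: real
    by (simp add: power2_diff)
  ultimately show ?thesis
    using u v RL2_comp_mult_integrable[OF u v] by (auto simp: mem_RL2_iff rl2_sub_def intro: borel_measurable_diff)
qed

lemma op_zero_closed: "op_zero m n u \<in> RL2 a b m n"
proof -
  have "rl2_comp a b (op_zero m n u) i = (\<lambda>s. 0)" if "i < n" for i
    using that by (simp add: op_zero_def rl2_comp_def fun_eq_iff)
  then show ?thesis
    by (simp add: mem_RL2_iff op_zero_def)
qed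

lemma rl2_inner_lincomb_left:
  assumes u: "u \<in> RL2 a b m n" and v: "v \<in> RL2 a b m n" and w: "w \<in> RL2 a b m n"
    and z: "z \<in> RL2 a b m n"
    and fst_z: "\<And>j. j < m \<Longrightarrow> vec_index (fst z) j = \<alpha> * vec_index (fst u) j + \<beta> * vec_index (fst v) j"
    and comp_z: "\<And>i s. i < n \<Longrightarrow> rl2_comp a b z i s = \<alpha> * rl2_comp a b u i s + \<beta> * rl2_comp a b v i s"
  shows "rl2_inner a b z w = \<alpha> * rl2_inner a b u w + \<beta> * rl2_inner a b v w"
proof -
  let ?I = "\<lambda>u i. \<integral>s. rl2_comp a b u i s * rl2_comp a b w i s \<partial>lborel"
  have "?I z i = \<alpha> * ?I u i + \<beta> * ?I v i" if "i < n" for i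
  proof -
    have "?I z i = (\<integral>s. \<alpha> * (rl2_comp a b u i s * rl2_comp a b w i s) +
        \<beta> * (rl2_comp a b v i s * rl2_comp a b w i s) \<partial>lborel)"
      using comp_z[OF that] by (simp add: algebra_simps)
    then show ?thesis
      using RL2_comp_mult_integrable[OF u w that] RL2_comp_mult_integrable[OF v w that] by simp
  qed
  then show ?thesis
    unfolding rl2_inner_eq_sum[OF z w] rl2_inner_eq_sum[OF u w] rl2_inner_eq_sum[OF v w]
    by (simp add: fst_z algebra_simps sum.distrib sum_distrib_left)
qed

lemma rl2_inner_add_left:
  "u \<in> RL2 a b m n \<Longrightarrow> v \<in> RL2 a b m n \<Longrightarrow> w \<in> RL2 a b m n \<Longrightarrow>
     rl2_inner a b (rl2_add u v) w = rl2_inner a b u w + rl2_inner a b v w"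
  using rl2_inner_lincomb_left[of u a b m n v w "rl2_add u v" 1 1]
  by (simp add: rl2_add_closed rl2_fst_add rl2_comp_add)

lemma rl2_inner_diff_left:
  "u \<in> RL2 a b m n \<Longrightarrow> v \<in> RL2 a b m n \<Longrightarrow> w \<in> RL2 a b m n \<Longrightarrow>
     rl2_inner a b (rl2_sub u v) w = rl2_inner a b u w - rl2_inner a b v w"
  using rl2_inner_lincomb_left[of u a b m n v w "rl2_sub u v" 1 "-1"]
  by (simp add: rl2_sub_closed rl2_fst_sub rl2_comp_sub)

lemma rl2_inner_scale_left:
  "u \<in> RL2 a b m n \<Longrightarrow> w \<in> RL2 a b m n \<Longrightarrow>
     rl2_inner a b (rl2_scale c u) w = c * rl2_inner a b u w"
  using rl2_inner_lincomb_left[of u a b m n u w "rl2_scale c u" c 0]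
  by (simp add: rl2_scale_closed rl2_fst_scale rl2_comp_scale)

lemma rl2_inner_commute:
  "u \<in> RL2 a b m n \<Longrightarrow> w \<in> RL2 a b m n \<Longrightarrow> rl2_inner a b u w = rl2_inner a b w u"
  by (simp add: rl2_inner_eq_sum mult.commute)

lemma rl2_inner_add_right:
  "u \<in> RL2 a b m n \<Longrightarrow> v \<in> RL2 a b m n \<Longrightarrow> w \<in> RL2 a b m n \<Longrightarrow>
     rl2_inner a b w (rl2_add u v) = rl2_inner a b w u + rl2_inner a b w v"
  by (metis rl2_inner_add_left rl2_inner_commute rl2_add_closed)

lemma rl2_inner_diff_right:
  "u \<in> RL2 a b m n \<Longrightarrow> v \<in> RL2 a b m n \<Longrightarrow> w \<in> RL2 a b m n \<Longrightarrow>
     rl2_inner a b w (rl2_sub u v) = rl2_inner a b w u - rl2_inner a b w v"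
  by (metis rl2_inner_diff_left rl2_inner_commute rl2_sub_closed)

lemma rl2_inner_scale_right:
  "u \<in> RL2 a b m n \<Longrightarrow> w \<in> RL2 a b m n \<Longrightarrow>
     rl2_inner a b w (rl2_scale c u) = c * rl2_inner a b w u"
  by (metis rl2_inner_scale_left rl2_inner_commute rl2_scale_closed)

lemma rl2_inner_op_zero_right: "w \<in> RL2 a b m n \<Longrightarrow> rl2_inner a b w (op_zero m n u) = 0"
  by (simp add: rl2_inner_eq_sum op_zero_closed) (simp add: op_zero_def rl2_comp_def)

lemma quadratic_nonneg_imp_discriminant_le:
  fixes A B C :: real
  assumes nonneg: "\<And>t. 0 \<le> A + 2 * t * B + t^2 * C"
  shows "B^2 \<le> A * C"
proof -
  have "C \<ge> 0"
  proof (rule ccontr)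
    assume "\<not> C \<ge> 0"
    define t where "t = sqrt ((\<bar>A\<bar> + 1) / - C)"
    have "t^2 = (\<bar>A\<bar> + 1) / - C"
      using \<open>\<not> C \<ge> 0\<close> by (simp add: t_def divide_nonneg_neg)
    then have "t^2 * C = - (\<bar>A\<bar> + 1)"
      using \<open>\<not> C \<ge> 0\<close> by (simp add: field_simps)
    moreover have "0 \<le> A + t^2 * C"
      using nonneg[of t] nonneg[of "-t"] by simp
    ultimately show False
      by linarith
  qed
  show ?thesis
  proof (cases "C = 0")
    case True
    have "B = 0"
    proof (rule ccontr)
      assume "B \<noteq> 0"
      then show False
        using nonneg[of "-(A + 1) / (2 * B)"] True by (simp add: field_simps)
    qed
    with True show ?thesis by simp
  next
    case False
    with \<open>C \<ge> 0\<close> have "C > 0" by simp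
    have "0 \<le> A + 2 * (- B / C) * B + (- B / C)^2 * C" by (rule nonneg)
    also have "\<dots> = A - B^2 / C"
      using \<open>C > 0\<close> by (simp add: field_simps power2_eq_square)
    finally show ?thesis
      using \<open>C > 0\<close> by (simp add: field_simps)
  qed
qed

lemma rl2_inner_Cauchy_Schwarz:
  assumes u: "u \<in> RL2 a b m n" and v: "v \<in> RL2 a b m n"
  shows "\<bar>rl2_inner a b u v\<bar> \<le> rl2_norm a b u * rl2_norm a b v"
proof -
  have "(rl2_inner a b u v)^2 \<le> rl2_inner a b u u * rl2_inner a b v v"
  proof (rule quadratic_nonneg_imp_discriminant_le)
    fix t
    have "0 \<le> rl2_inner a b (rl2_add u (rl2_scale t v)) (rl2_add u (rl2_scale t v))"
      by (rule rl2_inner_self_nonneg)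
    also have "\<dots> = rl2_inner a b u u + 2 * t * rl2_inner a b u v + t^2 * rl2_inner a b v v"
      using u v rl2_scale_closed[OF v] rl2_add_closed[OF u rl2_scale_closed[OF v]]
      by (simp add: rl2_inner_add_left rl2_inner_add_right rl2_inner_scale_left
          rl2_inner_scale_right rl2_inner_commute[OF u v] power2_eq_square algebra_simps)
    finally show "0 \<le> rl2_inner a b u u + 2 * t * rl2_inner a b u v + t^2 * rl2_inner a b v v" .
  qed
  then have "(rl2_inner a b u v)^2 \<le> (rl2_norm a b u * rl2_norm a b v)^2"
    by (simp add: power_mult_distrib rl2_norm_square)
  then show ?thesis
    using rl2_norm_nonneg by (metis abs_le_square_iff abs_of_nonneg mult_nonneg_nonneg)
qed

lemma rl2_norm_triangle:
  assumes x: "x \<in> RL2 a b m n" and y: "y \<in> RL2 a b m n"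
  shows "rl2_norm a b x \<le> rl2_norm a b y + rl2_norm a b (rl2_sub x y)"
proof -
  have "(rl2_norm a b x)^2 = rl2_inner a b (rl2_sub x y) x + rl2_inner a b y x"
    using rl2_norm_square rl2_inner_diff_left[OF x y x] by simp
  also have "\<dots> \<le> (rl2_norm a b y + rl2_norm a b (rl2_sub x y)) * rl2_norm a b x"
    using rl2_inner_Cauchy_Schwarz[OF rl2_sub_closed[OF x y] x] rl2_inner_Cauchy_Schwarz[OF y x]
    by (simp add: algebra_simps)
  finally show ?thesis
    using rl2_norm_nonneg[of a b x] rl2_norm_nonneg[of a b y] rl2_norm_nonneg[of a b "rl2_sub x y"]
    by (cases "rl2_norm a b x = 0") (auto simp: power2_eq_square)
qed

lemma rl2_norm_scale:
  assumes x: "x \<in> RL2 a b m n"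
  shows "rl2_norm a b (rl2_scale c x) = \<bar>c\<bar> * rl2_norm a b x"
proof -
  have "rl2_inner a b (rl2_scale c x) (rl2_scale c x) = c^2 * rl2_inner a b x x"
    using rl2_inner_scale_left[OF x rl2_scale_closed[OF x]] rl2_inner_scale_right[OF x x]
    by (simp add: power2_eq_square)
  then show ?thesis
    unfolding rl2_norm_def by (simp add: real_sqrt_mult)
qed

lemma rl2_dist_self: "u \<in> RL2 a b m n \<Longrightarrow> rl2_dist a b u u = 0"
  unfolding rl2_dist_def rl2_norm_def
  using rl2_inner_diff_left[OF _ _ rl2_sub_closed] by simp

lemma rl2_inner_cong_dist_0:
  assumes u: "u \<in> RL2 a b m n" and v: "v \<in> RL2 a b m n" and w: "w \<in> RL2 a b m n"
    and uv: "rl2_dist a b u v = 0"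
  shows "rl2_inner a b u w = rl2_inner a b v w"
proof -
  have "\<bar>rl2_inner a b (rl2_sub u v) w\<bar> \<le> 0"
    using rl2_inner_Cauchy_Schwarz[OF rl2_sub_closed[OF u v] w] uv by (simp add: rl2_dist_def)
  then show ?thesis
    using rl2_inner_diff_left[OF u v w] by simp
qed

section \<open>Boundedness of 4-PI operators\<close>

lemma mult_mat_vec_index_eq_sum:
  "M \<in> carrier_mat r c \<Longrightarrow> v \<in> carrier_vec c \<Longrightarrow> i < r \<Longrightarrow>
     vec_index (mult_mat_vec M v) i = (\<Sum>j<c. M $$ (i,j) * vec_index v j)"
  by (simp add: scalar_prod_def atLeast0LessThan)

lemma continuous_on_poly_poly:
  "continuous_on UNIV (\<lambda>z::real \<times> real. poly (poly p [:snd z:]) (fst z))"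
proof (induction p rule: pCons_induct)
  case (pCons c p)
  have eq: "(\<lambda>z::real \<times> real. poly (poly (pCons c p) [:snd z:]) (fst z)) =
      (\<lambda>z. poly c (fst z) + snd z * poly (poly p [:snd z:]) (fst z))"
    by (simp add: fun_eq_iff)
  have "continuous_on UNIV (\<lambda>z::real \<times> real. poly c (fst z))"
    by (intro continuous_on_compose2[OF continuous_on_poly[OF continuous_on_id]] continuous_intros)
      auto
  then show ?case
    unfolding eq by (intro continuous_intros pCons.IH)
qed simp

lemma poly_measurable: "(\<lambda>s. poly p s :: real) \<in> borel_measurable lborel"
  using borel_measurable_continuous_onI[of "poly p"]
  by (simp add: continuous_on_poly[OF continuous_on_id])

lemma poly_poly_measurable:
  "(\<lambda>z::real \<times> real. poly (poly p [:snd z:]) (fst z)) \<in> borel_measurable (lborel \<Otimes>\<^sub>M lborel)"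
  using borel_measurable_continuous_onI[OF continuous_on_poly_poly[of p]]
  by (simp add: lborel_prod)

lemma poly_poly_measurable2: "(\<lambda>\<theta>. poly (poly p [:\<theta>:]) s :: real) \<in> borel_measurable lborel"
  using measurable_Pair2[OF poly_poly_measurable[of p], of s] by simp

definition pi_coeff_bound :: "real \<Rightarrow> real \<Rightarrow> nat \<Rightarrow> nat \<Rightarrow> nat \<Rightarrow> nat \<Rightarrow> pi4 \<Rightarrow> real \<Rightarrow> bool" where
  "pi_coeff_bound a b m1 n1 m2 n2 D M \<longleftrightarrow>
    (\<forall>i<m2. \<forall>j<m1. \<bar>pi_P D $$ (i,j)\<bar> \<le> M) \<and>
    (\<forall>i<m2. \<forall>j<n1. \<forall>s\<in>{a..b}. \<bar>poly (pi_Q1 D $$ (i,j)) s\<bar> \<le> M) \<and>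
    (\<forall>i<n2. \<forall>j<m1. \<forall>s\<in>{a..b}. \<bar>poly (pi_Q2 D $$ (i,j)) s\<bar> \<le> M) \<and>
    (\<forall>i<n2. \<forall>j<n1. \<forall>s\<in>{a..b}. \<bar>poly (pi_R0 D $$ (i,j)) s\<bar> \<le> M) \<and>
    (\<forall>i<n2. \<forall>j<n1. \<forall>s\<in>{a..b}. \<forall>\<theta>\<in>{a..b}. \<bar>poly (poly (pi_R1 D $$ (i,j)) [:\<theta>:]) s\<bar> \<le> M) \<and>
    (\<forall>i<n2. \<forall>j<n1. \<forall>s\<in>{a..b}. \<forall>\<theta>\<in>{a..b}. \<bar>poly (poly (pi_R2 D $$ (i,j)) [:\<theta>:]) s\<bar> \<le> M)"

text \<open>All coefficient values lie in a finite union of continuous images of compact sets.\<close>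

lemma pi_coeff_bound_exists: "\<exists>M\<ge>0. pi_coeff_bound a b m1 n1 m2 n2 D M"
proof -
  let ?box = "{a..b} \<times> {a..b}"
  let ?pp = "\<lambda>p (z::real \<times> real). poly (poly p [:snd z:]) (fst z)"
  define S1 where "S1 = (\<Union>i<m2. \<Union>j<m1. {pi_P D $$ (i,j)})"
  define S2 where "S2 = (\<Union>i<m2. \<Union>j<n1. poly (pi_Q1 D $$ (i,j)) ` {a..b})"
  define S3 where "S3 = (\<Union>i<n2. \<Union>j<m1. poly (pi_Q2 D $$ (i,j)) ` {a..b})"
  define S4 where "S4 = (\<Union>i<n2. \<Union>j<n1. poly (pi_R0 D $$ (i,j)) ` {a..b})"
  define S5 where "S5 = (\<Union>i<n2. \<Union>j<n1. ?pp (pi_R1 D $$ (i,j)) ` ?box)"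
  define S6 where "S6 = (\<Union>i<n2. \<Union>j<n1. ?pp (pi_R2 D $$ (i,j)) ` ?box)"
  have "continuous_on ?box (?pp p)" for p
    using continuous_on_subset[OF continuous_on_poly_poly] by blast
  then have "compact (S1 \<union> S2 \<union> S3 \<union> S4 \<union> S5 \<union> S6)"
    unfolding S1_def S2_def S3_def S4_def S5_def S6_def
    by (intro compact_Un compact_UN finite_lessThan compact_continuous_image compact_Times
        continuous_on_poly continuous_on_id compact_Icc) auto
  then obtain M where "M > 0" and "\<forall>x \<in> S1 \<union> S2 \<union> S3 \<union> S4 \<union> S5 \<union> S6. \<bar>x\<bar> \<le> M"
    using compact_imp_bounded bounded_pos by (metis real_norm_def)
  then have "pi_coeff_bound a b m1 n1 m2 n2 D M"
    unfolding pi_coeff_bound_def S1_def S2_def S3_def S4_def S5_def S6_def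
    by (simp add: ball_Un)
  with \<open>M > 0\<close> show ?thesis
    by (intro exI[of _ M]) simp
qed

lemma pi_op_fst_index:
  assumes D: "is_pi4 m1 n1 m2 n2 D" and u: "u \<in> RL2 a b m1 n1" and i: "i < m2"
  shows "vec_index (fst (pi_op a b D u)) i = (\<Sum>j<m1. pi_P D $$ (i,j) * vec_index (fst u) j) +
     (\<integral>\<theta>. (\<Sum>j<n1. poly (pi_Q1 D $$ (i,j)) \<theta> * rl2_comp a b u j \<theta>) \<partial>lborel)"
proof -
  have P: "pi_P D \<in> carrier_mat m2 m1" and Q1: "pi_Q1 D \<in> carrier_mat m2 n1"
    using D by (simp_all add: is_pi4_def)
  have "indicator {a..b} \<theta> *\<^sub>R vec_index (mult_mat_vec (eval1 (pi_Q1 D) \<theta>) (snd u \<theta>)) i =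
      (\<Sum>j<n1. poly (pi_Q1 D $$ (i,j)) \<theta> * rl2_comp a b u j \<theta>)" for \<theta>
  proof (cases "\<theta> \<in> {a..b}")
    case True
    have "eval1 (pi_Q1 D) \<theta> \<in> carrier_mat m2 n1"
      using Q1 by (simp add: eval1_def)
    from mult_mat_vec_index_eq_sum[OF this RL2_carrier_snd[OF u True] i]
    show ?thesis
      using Q1 i True by (simp add: rl2_comp_def eval1_def)
  qed (simp add: rl2_comp_def)
  then show ?thesis
    using mult_mat_vec_index_eq_sum[OF P RL2_carrier_fst[OF u] i] P i
    by (simp add: pi_op_def set_lebesgue_integral_def)
qed

lemma pi_op_snd_index:
  assumes D: "is_pi4 m1 n1 m2 n2 D" and u: "u \<in> RL2 a b m1 n1" and i: "i < n2"
    and s: "s \<in> {a..b}"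
  shows "vec_index (snd (pi_op a b D u) s) i =
     (\<Sum>j<m1. poly (pi_Q2 D $$ (i,j)) s * vec_index (fst u) j) +
     (\<Sum>j<n1. poly (pi_R0 D $$ (i,j)) s * rl2_comp a b u j s) +
     (\<integral>\<theta>. (\<Sum>j<n1. (indicator {a..s} \<theta> * poly (poly (pi_R1 D $$ (i,j)) [:\<theta>:]) s) *
        rl2_comp a b u j \<theta>) \<partial>lborel) +
     (\<integral>\<theta>. (\<Sum>j<n1. (indicator {s..b} \<theta> * poly (poly (pi_R2 D $$ (i,j)) [:\<theta>:]) s) *
        rl2_comp a b u j \<theta>) \<partial>lborel)"
proof -
  have Q2: "pi_Q2 D \<in> carrier_mat n2 m1" and R0: "pi_R0 D \<in> carrier_mat n2 n1"
    and R1: "pi_R1 D \<in> carrier_mat n2 n1" and R2: "pi_R2 D \<in> carrier_mat n2 n1"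
    using D by (simp_all add: is_pi4_def)
  have kernel: "indicator S \<theta> *\<^sub>R vec_index (mult_mat_vec (eval2 R s \<theta>) (snd u \<theta>)) i =
      (\<Sum>j<n1. (indicator S \<theta> * poly (poly (R $$ (i,j)) [:\<theta>:]) s) * rl2_comp a b u j \<theta>)"
    if R: "R \<in> carrier_mat n2 n1" and S: "S \<subseteq> {a..b}" for R S \<theta>
  proof (cases "\<theta> \<in> S")
    case True
    with S have \<theta>: "\<theta> \<in> {a..b}" by auto
    have "eval2 R s \<theta> \<in> carrier_mat n2 n1"
      using R by (simp add: eval2_def)
    from mult_mat_vec_index_eq_sum[OF this RL2_carrier_snd[OF u \<theta>] i]
    show ?thesis
      using R i True \<theta> by (simp add: rl2_comp_def eval2_def)
  qed simp
  have "eval1 (pi_Q2 D) s \<in> carrier_mat n2 m1" "eval1 (pi_R0 D) s \<in> carrier_mat n2 n1"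
    using Q2 R0 by (simp_all add: eval1_def)
  from mult_mat_vec_index_eq_sum[OF this(1) RL2_carrier_fst[OF u] i]
    mult_mat_vec_index_eq_sum[OF this(2) RL2_carrier_snd[OF u s] i]
  show ?thesis
    using Q2 R0 i s kernel[OF R1, of "{a..s}"] kernel[OF R2, of "{s..b}"]
    by (simp add: pi_op_def set_lebesgue_integral_def eval1_def rl2_comp_def)
qed

lemma rl2_norm_square_eq_sum:
  "u \<in> RL2 a b m n \<Longrightarrow>
     (rl2_norm a b u)^2 = (\<Sum>j<m. (vec_index (fst u) j)^2) + (\<Sum>j<n. \<integral>s. (rl2_comp a b u j s)^2 \<partial>lborel)"
  using rl2_norm_square[of a b u] rl2_inner_eq_sum[of u a b m n u] by (simp add: power2_eq_square)

lemma rl2_fst_abs_le_norm: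
  assumes u: "u \<in> RL2 a b m n" and j: "j < m"
  shows "\<bar>vec_index (fst u) j\<bar> \<le> rl2_norm a b u"
proof -
  have "(vec_index (fst u) j)^2 \<le> (\<Sum>j<m. (vec_index (fst u) j)^2)"
    using j by (intro member_le_sum) auto
  also have "\<dots> \<le> (rl2_norm a b u)^2"
    unfolding rl2_norm_square_eq_sum[OF u] by (intro add_increasing2 sum_nonneg) auto
  finally show ?thesis
    using rl2_norm_nonneg by (metis abs_le_square_iff abs_of_nonneg)
qed

lemma rl2_comp_square_integral_le_norm:
  assumes u: "u \<in> RL2 a b m n"
  shows "(\<Sum>j<n. \<integral>s. (rl2_comp a b u j s)^2 \<partial>lborel) \<le> (rl2_norm a b u)^2"
  unfolding rl2_norm_square_eq_sum[OF u] by (intro add_increasing sum_nonneg) auto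

lemma integrable_indicator_Icc: "integrable lborel (indicator {a..b} :: real \<Rightarrow> real)"
  by (rule integrable_real_indicator) (auto simp: emeasure_lborel_Icc_eq)

lemma RL2_comp_abs_integrable:
  assumes u: "u \<in> RL2 a b m n" and j: "j < n"
  shows "integrable lborel (\<lambda>s. \<bar>rl2_comp a b u j s\<bar>)"
proof (rule Bochner_Integration.integrable_bound)
  show "integrable lborel (\<lambda>s. (indicator {a..b} s + (rl2_comp a b u j s)^2) / 2)"
    using integrable_indicator_Icc RL2_comp_square_integrable[OF u j] by auto
  show "AE s in lborel. norm \<bar>rl2_comp a b u j s\<bar> \<le>
      norm ((indicator {a..b} s + (rl2_comp a b u j s)^2) / 2)"
  proof (rule AE_I2)
    fix s
    have "0 \<le> (\<bar>rl2_comp a b u j s\<bar> - 1)^2" by simp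
    then show "norm \<bar>rl2_comp a b u j s\<bar> \<le> norm ((indicator {a..b} s + (rl2_comp a b u j s)^2) / 2)"
      by (cases "s \<in> {a..b}") (simp_all add: power2_diff rl2_comp_def)
  qed
qed (use RL2_comp_measurable[OF u j] in measurable)

lemma RL2_comp_L1_le:
  assumes u: "u \<in> RL2 a b m n" and j: "j < n" and ab: "a < b"
  shows "(\<integral>s. \<bar>rl2_comp a b u j s\<bar> \<partial>lborel) \<le> sqrt (b - a) * rl2_norm a b u"
proof -
  let ?f = "rl2_comp a b u j"
  let ?A = "\<integral>s. (?f s)^2 \<partial>lborel" and ?B = "\<integral>s. \<bar>?f s\<bar> \<partial>lborel"
  have "?B^2 \<le> ?A * (b - a)"
  proof (rule quadratic_nonneg_imp_discriminant_le)
    fix t :: real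
    have square: "(\<bar>?f s\<bar> + t * indicator {a..b} s)^2 =
        (?f s)^2 + 2 * t * \<bar>?f s\<bar> + t^2 * indicator {a..b} s" for s
      by (cases "s \<in> {a..b}") (simp_all add: rl2_comp_def power2_sum power_mult_distrib)
    have "0 \<le> (\<integral>s. (\<bar>?f s\<bar> + t * indicator {a..b} s)^2 \<partial>lborel)"
      by simp
    also have "\<dots> = (\<integral>s. (?f s)^2 + 2 * t * \<bar>?f s\<bar> + t^2 * indicator {a..b} s \<partial>lborel)"
      unfolding square ..
    also have "\<dots> = ?A + 2 * t * ?B + t^2 * (b - a)"
      using RL2_comp_square_integrable[OF u j] RL2_comp_abs_integrable[OF u j]
        integrable_indicator_Icc[of a b] ab by simp
    finally show "0 \<le> ?A + 2 * t * ?B + t^2 * (b - a)" .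
  qed
  also have "\<dots> \<le> (rl2_norm a b u)^2 * (b - a)"
  proof -
    have "?A \<le> (\<Sum>j<n. \<integral>s. (rl2_comp a b u j s)^2 \<partial>lborel)"
      using j by (intro member_le_sum) auto
    then show ?thesis
      using rl2_comp_square_integral_le_norm[OF u] ab by (intro mult_right_mono) auto
  qed
  finally have "?B^2 \<le> (sqrt (b - a) * rl2_norm a b u)^2"
    using ab by (simp add: power_mult_distrib mult.commute)
  then show ?thesis
    by (rule power2_le_imp_le) (use ab rl2_norm_nonneg in simp)
qed

definition rl2_l1_norm :: "real \<Rightarrow> real \<Rightarrow> nat \<Rightarrow> nat \<Rightarrow> rl2 \<Rightarrow> real" where
  "rl2_l1_norm a b m n u =
     (\<Sum>j<m. \<bar>vec_index (fst u) j\<bar>) + (\<Sum>j<n. \<integral>s. \<bar>rl2_comp a b u j s\<bar> \<partial>lborel)"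

lemma rl2_l1_norm_nonneg: "rl2_l1_norm a b m n u \<ge> 0"
  unfolding rl2_l1_norm_def by (intro add_nonneg_nonneg sum_nonneg) auto

lemma rl2_l1_norm_le:
  assumes u: "u \<in> RL2 a b m n" and ab: "a < b"
  shows "rl2_l1_norm a b m n u \<le> (real m + real n * sqrt (b - a)) * rl2_norm a b u"
proof -
  have "(\<Sum>j<m. \<bar>vec_index (fst u) j\<bar>) \<le> (\<Sum>j<m. rl2_norm a b u)"
    by (intro sum_mono rl2_fst_abs_le_norm[OF u]) simp
  moreover have "(\<Sum>j<n. \<integral>s. \<bar>rl2_comp a b u j s\<bar> \<partial>lborel) \<le> (\<Sum>j<n. sqrt (b - a) * rl2_norm a b u)"
    by (intro sum_mono RL2_comp_L1_le[OF u _ ab]) simp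
  ultimately show ?thesis
    unfolding rl2_l1_norm_def by (simp add: algebra_simps)
qed

lemma abs_sum_mult_le:
  fixes c y :: "nat \<Rightarrow> real"
  assumes "\<And>j. j < n \<Longrightarrow> \<bar>c j\<bar> \<le> M"
  shows "\<bar>\<Sum>j<n. c j * y j\<bar> \<le> M * (\<Sum>j<n. \<bar>y j\<bar>)"
proof -
  have "\<bar>\<Sum>j<n. c j * y j\<bar> \<le> (\<Sum>j<n. \<bar>c j\<bar> * \<bar>y j\<bar>)"
    using sum_abs[of "\<lambda>j. c j * y j"] by (simp add: abs_mult)
  also have "\<dots> \<le> (\<Sum>j<n. M * \<bar>y j\<bar>)"
    using assms by (intro sum_mono mult_right_mono) auto
  finally show ?thesis
    by (simp add: sum_distrib_left)
qed

lemma kernel_integral_sum: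
  fixes f c :: "nat \<Rightarrow> real \<Rightarrow> real"
  assumes f_meas: "\<And>j. j < n \<Longrightarrow> f j \<in> borel_measurable lborel"
    and f_int: "\<And>j. j < n \<Longrightarrow> integrable lborel (\<lambda>\<theta>. \<bar>f j \<theta>\<bar>)"
    and c_meas: "\<And>j. j < n \<Longrightarrow> c j \<in> borel_measurable lborel"
    and c_bound: "\<And>j \<theta>. j < n \<Longrightarrow> f j \<theta> \<noteq> 0 \<Longrightarrow> \<bar>c j \<theta>\<bar> \<le> M"
  shows "integrable lborel (\<lambda>\<theta>. \<Sum>j<n. c j \<theta> * f j \<theta>)"
    and "\<bar>\<integral>\<theta>. (\<Sum>j<n. c j \<theta> * f j \<theta>) \<partial>lborel\<bar> \<le> M * (\<Sum>j<n. \<integral>\<theta>. \<bar>f j \<theta>\<bar> \<partial>lborel)"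
proof -
  have bound: "\<bar>c j \<theta> * f j \<theta>\<bar> \<le> M * \<bar>f j \<theta>\<bar>" if "j < n" for j \<theta>
    using c_bound[OF that] by (cases "f j \<theta> = 0") (simp_all add: abs_mult mult_right_mono)
  have int: "integrable lborel (\<lambda>\<theta>. c j \<theta> * f j \<theta>)" if j: "j < n" for j
  proof (rule Bochner_Integration.integrable_bound)
    show "integrable lborel (\<lambda>\<theta>. M * \<bar>f j \<theta>\<bar>)"
      using f_int[OF j] by simp
    show "AE \<theta> in lborel. norm (c j \<theta> * f j \<theta>) \<le> norm (M * \<bar>f j \<theta>\<bar>)"
      using bound[OF j] by (intro AE_I2) (smt (verit) real_norm_def)
  qed (use f_meas[OF j] c_meas[OF j] in measurable)
  then show "integrable lborel (\<lambda>\<theta>. \<Sum>j<n. c j \<theta> * f j \<theta>)"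
    by auto
  have "\<bar>\<integral>\<theta>. (\<Sum>j<n. c j \<theta> * f j \<theta>) \<partial>lborel\<bar> \<le> (\<Sum>j<n. \<bar>\<integral>\<theta>. c j \<theta> * f j \<theta> \<partial>lborel\<bar>)"
    using int by simp
  also have "\<dots> \<le> (\<Sum>j<n. M * \<integral>\<theta>. \<bar>f j \<theta>\<bar> \<partial>lborel)"
  proof (rule sum_mono)
    fix j assume "j \<in> {..<n}"
    then have j: "j < n" by simp
    have "\<bar>\<integral>\<theta>. c j \<theta> * f j \<theta> \<partial>lborel\<bar> \<le> (\<integral>\<theta>. M * \<bar>f j \<theta>\<bar> \<partial>lborel)"
      by (rule integral_abs_bound_integral[OF int[OF j]]) (use f_int[OF j] bound[OF j] in auto)
    then show "\<bar>\<integral>\<theta>. c j \<theta> * f j \<theta> \<partial>lborel\<bar> \<le> M * \<integral>\<theta>. \<bar>f j \<theta>\<bar> \<partial>lborel"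
      by simp
  qed
  finally show "\<bar>\<integral>\<theta>. (\<Sum>j<n. c j \<theta> * f j \<theta>) \<partial>lborel\<bar> \<le> M * (\<Sum>j<n. \<integral>\<theta>. \<bar>f j \<theta>\<bar> \<partial>lborel)"
    by (simp add: sum_distrib_left)
qed

lemma pi_op_fst_abs_le:
  assumes D: "is_pi4 m1 n1 m2 n2 D" and u: "u \<in> RL2 a b m1 n1"
    and M: "pi_coeff_bound a b m1 n1 m2 n2 D M" and i: "i < m2"
  shows "\<bar>vec_index (fst (pi_op a b D u)) i\<bar> \<le> M * rl2_l1_norm a b m1 n1 u"
proof -
  have "\<bar>\<Sum>j<m1. pi_P D $$ (i,j) * vec_index (fst u) j\<bar> \<le> M * (\<Sum>j<m1. \<bar>vec_index (fst u) j\<bar>)"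
    using M i by (intro abs_sum_mult_le) (simp add: pi_coeff_bound_def)
  moreover have "\<bar>\<integral>\<theta>. (\<Sum>j<n1. poly (pi_Q1 D $$ (i,j)) \<theta> * rl2_comp a b u j \<theta>) \<partial>lborel\<bar> \<le>
      M * (\<Sum>j<n1. \<integral>\<theta>. \<bar>rl2_comp a b u j \<theta>\<bar> \<partial>lborel)"
    using M i
    by (intro kernel_integral_sum(2) RL2_comp_measurable[OF u] RL2_comp_abs_integrable[OF u]
        poly_measurable) (auto simp: pi_coeff_bound_def dest: rl2_comp_nonzero_imp_mem)
  ultimately show ?thesis
    unfolding pi_op_fst_index[OF D u i] rl2_l1_norm_def by (simp add: algebra_simps)
qed

lemma pi_op_comp_abs_le:
  assumes D: "is_pi4 m1 n1 m2 n2 D" and u: "u \<in> RL2 a b m1 n1"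
    and M: "pi_coeff_bound a b m1 n1 m2 n2 D M" and "M \<ge> 0" and i: "i < n2"
  shows "\<bar>rl2_comp a b (pi_op a b D u) i s\<bar> \<le>
    2 * M * rl2_l1_norm a b m1 n1 u + M * (\<Sum>j<n1. \<bar>rl2_comp a b u j s\<bar>)"
proof (cases "s \<in> {a..b}")
  case s: True
  let ?L1 = "\<Sum>j<n1. \<integral>\<theta>. \<bar>rl2_comp a b u j \<theta>\<bar> \<partial>lborel"
  have kernel: "\<bar>\<integral>\<theta>. (\<Sum>j<n1. (indicator S \<theta> * poly (poly (R $$ (i,j)) [:\<theta>:]) s) *
      rl2_comp a b u j \<theta>) \<partial>lborel\<bar> \<le> M * ?L1"
    if R: "\<And>j \<theta>. j < n1 \<Longrightarrow> \<theta> \<in> {a..b} \<Longrightarrow> \<bar>poly (poly (R $$ (i,j)) [:\<theta>:]) s\<bar> \<le> M"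
      and S: "S \<in> sets lborel" for R S
  proof (rule kernel_integral_sum(2))
    fix j assume j: "j < n1"
    show "rl2_comp a b u j \<in> borel_measurable lborel"
      by (rule RL2_comp_measurable[OF u j])
    show "integrable lborel (\<lambda>\<theta>. \<bar>rl2_comp a b u j \<theta>\<bar>)"
      by (rule RL2_comp_abs_integrable[OF u j])
    show "(\<lambda>\<theta>. indicator S \<theta> * poly (poly (R $$ (i,j)) [:\<theta>:]) s) \<in> borel_measurable lborel"
      using S poly_poly_measurable2 by measurable
  next
    fix j \<theta> assume "j < n1" "rl2_comp a b u j \<theta> \<noteq> 0"
    then show "\<bar>indicator S \<theta> * poly (poly (R $$ (i,j)) [:\<theta>:]) s\<bar> \<le> M"
      using R[of j \<theta>] \<open>M \<ge> 0\<close> by (auto simp: indicator_def dest: rl2_comp_nonzero_imp_mem)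
  qed
  have Q2: "\<bar>\<Sum>j<m1. poly (pi_Q2 D $$ (i,j)) s * vec_index (fst u) j\<bar> \<le>
      M * (\<Sum>j<m1. \<bar>vec_index (fst u) j\<bar>)"
    using M i s by (intro abs_sum_mult_le) (simp add: pi_coeff_bound_def)
  have R0: "\<bar>\<Sum>j<n1. poly (pi_R0 D $$ (i,j)) s * rl2_comp a b u j s\<bar> \<le>
      M * (\<Sum>j<n1. \<bar>rl2_comp a b u j s\<bar>)"
    using M i s by (intro abs_sum_mult_le) (simp add: pi_coeff_bound_def)
  have R1: "\<bar>poly (poly (pi_R1 D $$ (i,j)) [:\<theta>:]) s\<bar> \<le> M"
    and R2: "\<bar>poly (poly (pi_R2 D $$ (i,j)) [:\<theta>:]) s\<bar> \<le> M"
    if "j < n1" "\<theta> \<in> {a..b}" for j \<theta>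
    using M i s that by (simp_all add: pi_coeff_bound_def)
  have L1: "M * (\<Sum>j<m1. \<bar>vec_index (fst u) j\<bar>) + 2 * (M * ?L1) \<le> 2 * M * rl2_l1_norm a b m1 n1 u"
    using \<open>M \<ge> 0\<close> by (simp add: rl2_l1_norm_def algebra_simps sum_nonneg)
  have sum4: "\<bar>t1 + t2 + t3 + t4\<bar> \<le> X + y"
    if "\<bar>t1\<bar> \<le> x" "\<bar>t2\<bar> \<le> y" "\<bar>t3\<bar> \<le> z" "\<bar>t4\<bar> \<le> z" "x + 2 * z \<le> X" for t1 t2 t3 t4 x y z X :: real
    using that by arith
  have "{a..s} \<in> sets lborel" "{s..b} \<in> sets lborel"
    by simp_all
  from sum4[OF Q2 R0 kernel[OF R1 this(1)] kernel[OF R2 this(2)] L1] show ?thesis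
    using s by (simp add: rl2_comp_def pi_op_snd_index[OF D u i s])
qed (simp add: rl2_comp_def \<open>M \<ge> 0\<close> rl2_l1_norm_nonneg sum_nonneg)

lemma kernel_integral_measurable:
  fixes f :: "nat \<Rightarrow> real \<Rightarrow> real" and p :: "nat \<Rightarrow> real poly poly"
  assumes S: "closed {z. snd z \<in> S (fst z)}" and f: "\<And>j. j < n \<Longrightarrow> f j \<in> borel_measurable lborel"
  shows "(\<lambda>s. \<integral>\<theta>. (\<Sum>j<n. (indicator (S s) \<theta> * poly (poly (p j) [:\<theta>:]) s) * f j \<theta>) \<partial>lborel)
     \<in> borel_measurable lborel"
proof -
  let ?C = "{z. snd z \<in> S (fst z)}"
  have "indicator ?C \<in> borel_measurable (lborel \<Otimes>\<^sub>M lborel :: (real \<times> real) measure)"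
    using borel_closed[OF S] by (simp add: lborel_prod)
  moreover have "(\<lambda>z. f j (snd z)) \<in> borel_measurable (lborel \<Otimes>\<^sub>M lborel)" if "j < n" for j
    using measurable_compose[OF measurable_snd[of lborel lborel] f[OF that]] by (simp add: o_def)
  ultimately have "(\<lambda>(s, \<theta>). \<Sum>j<n. (indicator ?C (s, \<theta>) * poly (poly (p j) [:\<theta>:]) s) * f j \<theta>)
     \<in> borel_measurable (lborel \<Otimes>\<^sub>M lborel)"
    unfolding case_prod_beta'
    by (intro borel_measurable_sum borel_measurable_times poly_poly_measurable) auto
  then have "(\<lambda>s. \<integral>\<theta>. (\<Sum>j<n. (indicator ?C (s, \<theta>) * poly (poly (p j) [:\<theta>:]) s) * f j \<theta>) \<partial>lborel)
     \<in> borel_measurable lborel"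
    by (rule lborel.borel_measurable_lebesgue_integral)
  moreover have "indicator ?C (s, \<theta>) = (indicator (S s) \<theta> :: real)" for s \<theta>
    by (simp split: split_indicator)
  ultimately show ?thesis
    by simp
qed

lemma pi_op_comp_measurable:
  assumes D: "is_pi4 m1 n1 m2 n2 D" and u: "u \<in> RL2 a b m1 n1" and i: "i < n2"
  shows "rl2_comp a b (pi_op a b D u) i \<in> borel_measurable lborel"
proof -
  have "closed {z :: real \<times> real. snd z \<in> {a..fst z}}" "closed {z :: real \<times> real. snd z \<in> {fst z..b}}"
    unfolding atLeastAtMost_iff by (intro closed_Collect_conj closed_Collect_le continuous_intros)+
  note kernel = kernel_integral_measurable[OF this(1)] kernel_integral_measurable[OF this(2)]
  have "rl2_comp a b (pi_op a b D u) i = (\<lambda>s. indicator {a..b} s *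
     ((\<Sum>j<m1. poly (pi_Q2 D $$ (i,j)) s * vec_index (fst u) j) +
      (\<Sum>j<n1. poly (pi_R0 D $$ (i,j)) s * rl2_comp a b u j s) +
      (\<integral>\<theta>. (\<Sum>j<n1. (indicator {a..s} \<theta> * poly (poly (pi_R1 D $$ (i,j)) [:\<theta>:]) s) *
         rl2_comp a b u j \<theta>) \<partial>lborel) +
      (\<integral>\<theta>. (\<Sum>j<n1. (indicator {s..b} \<theta> * poly (poly (pi_R2 D $$ (i,j)) [:\<theta>:]) s) *
         rl2_comp a b u j \<theta>) \<partial>lborel)))"
    using pi_op_snd_index[OF D u i] by (intro ext) (simp add: rl2_comp_def split: split_indicator)
  also have "\<dots> \<in> borel_measurable lborel"
    using RL2_comp_measurable[OF u] by (intro borel_measurable_times borel_measurable_add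
        borel_measurable_sum poly_measurable kernel borel_measurable_indicator) auto
  finally show ?thesis .
qed

lemma square_integral_le_if_dominated:
  fixes g :: "real \<Rightarrow> real" and f :: "nat \<Rightarrow> real \<Rightarrow> real"
  assumes g_meas: "g \<in> borel_measurable lborel" and ab: "a \<le> b"
    and g_out: "\<And>s. s \<notin> {a..b} \<Longrightarrow> g s = 0"
    and g_le: "\<And>s. s \<in> {a..b} \<Longrightarrow> \<bar>g s\<bar> \<le> c + M * (\<Sum>j<n. \<bar>f j s\<bar>)"
    and f_int: "\<And>j. j < n \<Longrightarrow> integrable lborel (\<lambda>s. (f j s)^2)"
  shows "integrable lborel (\<lambda>s. (g s)^2)"
    and "(\<integral>s. (g s)^2 \<partial>lborel) \<le> 2 * (b - a) * c^2 + 2 * real n * M^2 * (\<Sum>j<n. \<integral>s. (f j s)^2 \<partial>lborel)"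
proof -
  define R where "R s = 2 * c^2 * indicator {a..b} s + 2 * real n * M^2 * (\<Sum>j<n. (f j s)^2)" for s
  have R_int: "integrable lborel R"
    unfolding R_def using f_int
    by (intro Bochner_Integration.integrable_add integrable_mult_right
        Bochner_Integration.integrable_sum integrable_indicator_Icc) auto
  have g_R: "(g s)^2 \<le> R s" for s
  proof (cases "s \<in> {a..b}")
    case True
    have "(\<Sum>j<n. 1 * \<bar>f j s\<bar>)^2 \<le> (\<Sum>j<n. 1^2) * (\<Sum>j<n. \<bar>f j s\<bar>^2)"
      by (rule Cauchy_Schwarz_ineq_sum)
    then have "(\<Sum>j<n. \<bar>f j s\<bar>)^2 \<le> n * (\<Sum>j<n. (f j s)^2)"
      by simp
    from mult_left_mono[OF this zero_le_power2[of M]]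
    have sum: "(M * (\<Sum>j<n. \<bar>f j s\<bar>))^2 \<le> n * M^2 * (\<Sum>j<n. (f j s)^2)"
      by (simp add: algebra_simps)
    have "(g s)^2 \<le> (c + M * (\<Sum>j<n. \<bar>f j s\<bar>))^2"
      using g_le[OF True] by (metis abs_ge_zero power2_abs power_mono)
    also have "\<dots> \<le> 2 * c^2 + 2 * (M * (\<Sum>j<n. \<bar>f j s\<bar>))^2"
      using zero_le_power2[of "c - M * (\<Sum>j<n. \<bar>f j s\<bar>)"]
      unfolding power2_diff power2_sum by linarith
    finally show ?thesis
      using sum True by (simp add: R_def)
  qed (simp add: g_out R_def sum_nonneg)
  show g_int: "integrable lborel (\<lambda>s. (g s)^2)"
    by (rule Bochner_Integration.integrable_bound[OF R_int])
      (use g_meas g_R in \<open>auto intro: order_trans[OF _ abs_ge_self]\<close>)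
  have "(\<integral>s. (g s)^2 \<partial>lborel) \<le> (\<integral>s. R s \<partial>lborel)"
    by (rule integral_mono[OF g_int R_int g_R])
  also have "\<dots> = 2 * (b - a) * c^2 + 2 * real n * M^2 * (\<Sum>j<n. \<integral>s. (f j s)^2 \<partial>lborel)"
    unfolding R_def using ab integrable_indicator_Icc[of a b] f_int
    by (subst Bochner_Integration.integral_add)
      (auto simp: integral_sum algebra_simps)
  finally show "(\<integral>s. (g s)^2 \<partial>lborel) \<le> 2 * (b - a) * c^2 + 2 * real n * M^2 * (\<Sum>j<n. \<integral>s. (f j s)^2 \<partial>lborel)" .
qed

lemma pi_op_square_integral_le:
  assumes D: "is_pi4 m1 n1 m2 n2 D" and ab: "a < b" and u: "u \<in> RL2 a b m1 n1"
    and M: "pi_coeff_bound a b m1 n1 m2 n2 D M" "M \<ge> 0" and i: "i < n2"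
  shows "integrable lborel (\<lambda>s. (rl2_comp a b (pi_op a b D u) i s)^2)"
    and "(\<integral>s. (rl2_comp a b (pi_op a b D u) i s)^2 \<partial>lborel) \<le>
      8 * (b - a) * (M * rl2_l1_norm a b m1 n1 u)^2 + 2 * real n1 * M^2 * (rl2_norm a b u)^2"
proof -
  note dominated = square_integral_le_if_dominated[OF pi_op_comp_measurable[OF D u i] less_imp_le[OF ab]
      _ pi_op_comp_abs_le[OF D u M i] RL2_comp_square_integrable[OF u]]
  have out: "rl2_comp a b (pi_op a b D u) i s = 0" if "s \<notin> {a..b}" for s
    using that by (simp add: rl2_comp_def)
  show "integrable lborel (\<lambda>s. (rl2_comp a b (pi_op a b D u) i s)^2)"
    by (rule dominated(1)[OF out])
  have "2 * real n1 * M^2 * (\<Sum>j<n1. \<integral>s. (rl2_comp a b u j s)^2 \<partial>lborel) \<le>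
      2 * real n1 * M^2 * (rl2_norm a b u)^2"
    using rl2_comp_square_integral_le_norm[OF u] by (intro mult_left_mono) auto
  moreover have "2 * (b - a) * (2 * M * rl2_l1_norm a b m1 n1 u)^2 =
      8 * (b - a) * (M * rl2_l1_norm a b m1 n1 u)^2"
    by (simp add: power_mult_distrib)
  ultimately show "(\<integral>s. (rl2_comp a b (pi_op a b D u) i s)^2 \<partial>lborel) \<le>
      8 * (b - a) * (M * rl2_l1_norm a b m1 n1 u)^2 + 2 * real n1 * M^2 * (rl2_norm a b u)^2"
    using dominated(2)[OF out] by linarith
qed

lemma pi_op_closed:
  assumes D: "is_pi4 m1 n1 m2 n2 D" and ab: "a < b" and u: "u \<in> RL2 a b m1 n1"
  shows "pi_op a b D u \<in> RL2 a b m2 n2"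
proof -
  obtain M where M: "pi_coeff_bound a b m1 n1 m2 n2 D M" "M \<ge> 0"
    using pi_coeff_bound_exists by blast
  have "dim_row (pi_P D) = m2" "dim_row (pi_R0 D) = n2"
    using D by (auto simp: is_pi4_def)
  then show ?thesis
    using pi_op_comp_measurable[OF D u] pi_op_square_integral_le(1)[OF D ab u M]
    by (simp add: mem_RL2_iff pi_op_def)
qed

lemma pi_op_bounded:
  assumes D: "is_pi4 m1 n1 m2 n2 D" and ab: "a < b"
  shows "\<exists>K. \<forall>u\<in>RL2 a b m1 n1. rl2_norm a b (pi_op a b D u) \<le> K * rl2_norm a b u"
proof -
  obtain M where M: "pi_coeff_bound a b m1 n1 m2 n2 D M" "M \<ge> 0"
    using pi_coeff_bound_exists by blast
  define c where "c = real m1 + real n1 * sqrt (b - a)"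
  define K where "K = M^2 * (m2 * c^2 + n2 * (8 * (b - a) * c^2 + 2 * n1))"
  have "rl2_norm a b (pi_op a b D u) \<le> sqrt K * rl2_norm a b u" if u: "u \<in> RL2 a b m1 n1" for u
  proof -
    let ?N = "rl2_norm a b u" and ?L = "rl2_l1_norm a b m1 n1 u"
    have "M * ?L \<le> M * (c * ?N)"
      using rl2_l1_norm_le[OF u ab] M(2) by (simp add: c_def mult_left_mono)
    from power_mono[OF this, of 2] have L_sq: "(M * ?L)^2 \<le> M^2 * c^2 * ?N^2"
      using M(2) rl2_l1_norm_nonneg by (simp add: power_mult_distrib)
    have "(\<Sum>i<m2. (vec_index (fst (pi_op a b D u)) i)^2) \<le> (\<Sum>i<m2. M^2 * c^2 * ?N^2)"
    proof (rule sum_mono)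
      fix i assume "i \<in> {..<m2}"
      then have "\<bar>vec_index (fst (pi_op a b D u)) i\<bar>^2 \<le> (M * ?L)^2"
        using pi_op_fst_abs_le[OF D u M(1)] by (intro power_mono) auto
      with L_sq show "(vec_index (fst (pi_op a b D u)) i)^2 \<le> M^2 * c^2 * ?N^2"
        by simp
    qed
    moreover have "(\<Sum>i<n2. \<integral>s. (rl2_comp a b (pi_op a b D u) i s)^2 \<partial>lborel) \<le>
        (\<Sum>i<n2. 8 * (b - a) * M^2 * c^2 * ?N^2 + 2 * real n1 * M^2 * ?N^2)"
    proof (rule sum_mono)
      fix i assume "i \<in> {..<n2}"
      then have "(\<integral>s. (rl2_comp a b (pi_op a b D u) i s)^2 \<partial>lborel) \<le>
          8 * (b - a) * (M * ?L)^2 + 2 * real n1 * M^2 * ?N^2"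
        using pi_op_square_integral_le(2)[OF D ab u M] by simp
      also have "\<dots> \<le> 8 * (b - a) * (M^2 * c^2 * ?N^2) + 2 * real n1 * M^2 * ?N^2"
        using L_sq ab by simp
      finally show "(\<integral>s. (rl2_comp a b (pi_op a b D u) i s)^2 \<partial>lborel) \<le>
          8 * (b - a) * M^2 * c^2 * ?N^2 + 2 * real n1 * M^2 * ?N^2"
        by (simp add: algebra_simps)
    qed
    ultimately have "(rl2_norm a b (pi_op a b D u))^2 \<le> K * ?N^2"
      unfolding rl2_norm_square_eq_sum[OF pi_op_closed[OF D ab u]]
      by (simp add: K_def algebra_simps)
    then have "rl2_norm a b (pi_op a b D u) \<le> sqrt (K * ?N^2)"
      using rl2_norm_nonneg real_le_rsqrt by blast
    then show ?thesis
      using rl2_norm_nonneg by (simp add: real_sqrt_mult)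
  qed
  then show ?thesis
    by blast
qed

section \<open>Trajectories in RL2\<close>

definition rl2_tendsto :: "real \<Rightarrow> real \<Rightarrow> nat \<Rightarrow> nat \<Rightarrow> ('f \<Rightarrow> rl2) \<Rightarrow> rl2 \<Rightarrow> 'f filter \<Rightarrow> bool" where
  "rl2_tendsto a b m n Y L F \<longleftrightarrow>
     L \<in> RL2 a b m n \<and> (\<forall>\<^sub>F h in F. Y h \<in> RL2 a b m n) \<and> ((\<lambda>h. rl2_dist a b (Y h) L) \<longlongrightarrow> 0) F"

lemma rl2_tendsto_const: "L \<in> RL2 a b m n \<Longrightarrow> rl2_tendsto a b m n (\<lambda>_. L) L F"
  by (simp add: rl2_tendsto_def rl2_dist_self)

lemma rl2_tendsto_filtermap:
  "rl2_tendsto a b m n Y L (filtermap g F) \<longleftrightarrow> rl2_tendsto a b m n (\<lambda>h. Y (g h)) L F"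
  by (simp add: rl2_tendsto_def eventually_filtermap filterlim_filtermap)

lemma rl2_tendsto_mirror:
  fixes Y :: "real \<Rightarrow> rl2"
  shows "rl2_tendsto a b m n Y L (at 0) \<Longrightarrow> rl2_tendsto a b m n (\<lambda>h. Y (- h)) L (at 0)"
  using rl2_tendsto_filtermap[of a b m n Y L "uminus :: real \<Rightarrow> real" "at 0"]
    filtermap_at_minus[of "0 :: real"] by simp

lemma rl2_tendsto_inner:
  assumes Y: "rl2_tendsto a b m n Y L F" and Z: "rl2_tendsto a b m n Z M F"
  shows "((\<lambda>h. rl2_inner a b (Y h) (Z h)) \<longlongrightarrow> rl2_inner a b L M) F"
proof -
  let ?eY = "\<lambda>h. rl2_dist a b (Y h) L" and ?eZ = "\<lambda>h. rl2_dist a b (Z h) M"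
  let ?bound = "\<lambda>h. ?eY h * ?eZ h + ?eY h * rl2_norm a b M + rl2_norm a b L * ?eZ h"
  have L: "L \<in> RL2 a b m n" and M: "M \<in> RL2 a b m n"
    and Y_mem: "\<forall>\<^sub>F h in F. Y h \<in> RL2 a b m n" and Z_mem: "\<forall>\<^sub>F h in F. Z h \<in> RL2 a b m n"
    using Y Z by (simp_all add: rl2_tendsto_def)
  from Y_mem Z_mem have "\<forall>\<^sub>F h in F. norm (rl2_inner a b (Y h) (Z h) - rl2_inner a b L M) \<le> norm (?bound h) * 1"
  proof eventually_elim
    case (elim h)
    then have YL: "rl2_sub (Y h) L \<in> RL2 a b m n" and ZM: "rl2_sub (Z h) M \<in> RL2 a b m n"
      using L M by (simp_all add: rl2_sub_closed)
    have "rl2_inner a b (Y h) (Z h) - rl2_inner a b L M =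
        rl2_inner a b (rl2_sub (Y h) L) (rl2_sub (Z h) M) + rl2_inner a b (rl2_sub (Y h) L) M +
        rl2_inner a b L (rl2_sub (Z h) M)"
      using elim L M YL ZM
      by (simp add: rl2_inner_diff_left rl2_inner_diff_right rl2_inner_commute[OF L])
    then have "\<bar>rl2_inner a b (Y h) (Z h) - rl2_inner a b L M\<bar> \<le> ?bound h"
      using rl2_inner_Cauchy_Schwarz[OF YL ZM] rl2_inner_Cauchy_Schwarz[OF YL M]
        rl2_inner_Cauchy_Schwarz[OF L ZM]
      unfolding rl2_dist_def by linarith
    then show ?case
      by simp
  qed
  moreover have "(?bound \<longlongrightarrow> 0) F"
    using Y Z unfolding rl2_tendsto_def by (auto intro!: tendsto_eq_intros)
  ultimately have "((\<lambda>h. rl2_inner a b (Y h) (Z h) - rl2_inner a b L M) \<longlongrightarrow> 0) F"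
    by (rule tendsto_0_le[rotated])
  then show ?thesis
    by (simp add: LIM_zero_iff)
qed

lemma rl2_tendsto_lipschitz:
  assumes Q_map: "\<And>u. u \<in> RL2 a b m n \<Longrightarrow> Q u \<in> RL2 a b m n"
    and Q_lip: "\<And>u v. u \<in> RL2 a b m n \<Longrightarrow> v \<in> RL2 a b m n \<Longrightarrow>
      rl2_dist a b (Q u) (Q v) \<le> K * rl2_dist a b u v"
    and Y: "rl2_tendsto a b m n Y L F"
  shows "rl2_tendsto a b m n (\<lambda>h. Q (Y h)) (Q L) F"
proof -
  have L: "L \<in> RL2 a b m n"
    using Y by (simp add: rl2_tendsto_def)
  have Y_mem: "\<forall>\<^sub>F h in F. Y h \<in> RL2 a b m n"
    using Y by (simp add: rl2_tendsto_def)
  then have "\<forall>\<^sub>F h in F. norm (rl2_dist a b (Q (Y h)) (Q L)) \<le> norm (rl2_dist a b (Y h) L) * K"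
  proof eventually_elim
    case (elim h)
    then show ?case
      using Q_lip[OF elim L] by (simp add: rl2_dist_def rl2_norm_nonneg mult.commute)
  qed
  moreover have "((\<lambda>h. rl2_dist a b (Y h) L) \<longlongrightarrow> 0) F"
    using Y by (simp add: rl2_tendsto_def)
  ultimately have "((\<lambda>h. rl2_dist a b (Q (Y h)) (Q L)) \<longlongrightarrow> 0) F"
    by (rule tendsto_0_le[rotated])
  then show ?thesis
    using Q_map[OF L] eventually_mono[OF Y_mem Q_map] by (simp add: rl2_tendsto_def)
qed

lemma has_rl2_deriv_imp_continuous:
  assumes y: "\<And>s. s \<ge> 0 \<Longrightarrow> y s \<in> RL2 a b m n" and D: "D \<in> RL2 a b m n"
    and d: "has_rl2_deriv a b y D \<tau>" and \<tau>: "\<tau> \<ge> 0"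
  shows "continuous (at 0 within {-\<tau>..}) (\<lambda>h. rl2_dist a b (y (\<tau> + h)) (y \<tau>))"
proof -
  let ?q = "\<lambda>h. rl2_scale (1 / h) (rl2_sub (y (\<tau> + h)) (y \<tau>))"
  let ?f = "\<lambda>h. rl2_dist a b (y (\<tau> + h)) (y \<tau>)"
  have bound: "?f h \<le> \<bar>h\<bar> * (rl2_dist a b (?q h) D + rl2_norm a b D)"
    if "h \<noteq> 0" "h \<in> {-\<tau>..}" for h
  proof -
    have diff: "rl2_sub (y (\<tau> + h)) (y \<tau>) \<in> RL2 a b m n"
      using y that \<tau> by (simp add: rl2_sub_closed)
    have "rl2_norm a b (?q h) \<le> rl2_norm a b D + rl2_dist a b (?q h) D"
      using rl2_norm_triangle[OF rl2_scale_closed[OF diff] D] by (simp add: rl2_dist_def)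
    moreover have "?f h = \<bar>h\<bar> * rl2_norm a b (?q h)"
      using \<open>h \<noteq> 0\<close> by (simp add: rl2_dist_def rl2_norm_scale[OF diff])
    ultimately show ?thesis
      by (simp add: mult_left_mono add.commute)
  qed
  have "(?f \<longlongrightarrow> 0) (at 0 within {-\<tau>..})"
  proof (rule tendsto_0_le[where K = 1])
    have "((\<lambda>h. rl2_dist a b (?q h) D) \<longlongrightarrow> 0) (at 0 within {-\<tau>..})"
      using d unfolding has_rl2_deriv_def rl2_dist_def .
    from tendsto_mult[OF tendsto_rabs[OF tendsto_ident_at] tendsto_add[OF this tendsto_const]]
    show "((\<lambda>h. \<bar>h\<bar> * (rl2_dist a b (?q h) D + rl2_norm a b D)) \<longlongrightarrow> 0) (at 0 within {-\<tau>..})"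
      by simp
    have "norm (?f h) \<le> norm (\<bar>h\<bar> * (rl2_dist a b (?q h) D + rl2_norm a b D)) * 1"
      if "h \<noteq> 0" "h \<in> {-\<tau>..}" for h
    proof -
      have "0 \<le> ?f h"
        by (simp only: rl2_dist_def rl2_norm_nonneg)
      then show ?thesis
        using bound[OF that] by (simp only: real_norm_def mult_1_right)
    qed
    then show "\<forall>\<^sub>F h in at 0 within {-\<tau>..}. norm (?f h) \<le>
        norm (\<bar>h\<bar> * (rl2_dist a b (?q h) D + rl2_norm a b D)) * 1"
      unfolding eventually_at_filter by (intro always_eventually) blast
  qed
  then show ?thesis
    using rl2_dist_self[OF y[OF \<tau>]] by (simp add: continuous_within)
qed

lemma has_rl2_deriv_imp_tendsto:
  assumes y: "\<And>s. s \<ge> 0 \<Longrightarrow> y s \<in> RL2 a b m n" and D: "D \<in> RL2 a b m n"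
    and d: "has_rl2_deriv a b y D \<tau>" and \<tau>: "\<tau> \<ge> 0"
    and g: "(g \<longlongrightarrow> \<tau>) F" and g_nonneg: "\<forall>\<^sub>F h in F. g h \<ge> 0"
  shows "rl2_tendsto a b m n (\<lambda>h. y (g h)) (y \<tau>) F"
proof -
  let ?f = "\<lambda>h. rl2_dist a b (y (\<tau> + h)) (y \<tau>)"
  have "continuous (at 0 within {-\<tau>..}) ?f"
    by (rule has_rl2_deriv_imp_continuous[OF y D d \<tau>])
  moreover have "\<forall>\<^sub>F h in F. g h - \<tau> \<in> {-\<tau>..}"
    using g_nonneg by (rule eventually_mono) simp
  moreover have "((\<lambda>h. g h - \<tau>) \<longlongrightarrow> 0) F"
    using g by (simp add: LIM_zero)
  ultimately have "((\<lambda>h. ?f (g h - \<tau>)) \<longlongrightarrow> ?f 0) F"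
    by (rule continuous_within_tendsto_compose[where f = ?f])
  then show ?thesis
    using y[OF \<tau>] eventually_mono[OF g_nonneg y] rl2_dist_self[OF y[OF \<tau>]]
    by (simp add: rl2_tendsto_def)
qed

lemma has_rl2_deriv_quotient_tendsto:
  assumes y: "\<And>s. s \<ge> 0 \<Longrightarrow> y s \<in> RL2 a b m n" and D: "D \<in> RL2 a b m n"
    and d: "has_rl2_deriv a b y D \<tau>" and \<tau>: "\<tau> > 0"
  shows "rl2_tendsto a b m n (\<lambda>h. rl2_scale (1 / h) (rl2_sub (y (\<tau> + h)) (y \<tau>))) D (at 0)"
proof -
  have "at (0::real) within {-\<tau><..} = at 0"
    using \<tau> by (intro at_within_open) auto
  moreover have "((\<lambda>h. rl2_dist a b (rl2_scale (1 / h) (rl2_sub (y (\<tau> + h)) (y \<tau>))) D) \<longlongrightarrow> 0)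
      (at 0 within {-\<tau><..})"
    using d unfolding has_rl2_deriv_def rl2_dist_def by (rule tendsto_within_subset) auto
  moreover have "\<forall>\<^sub>F h in at 0. h \<in> {-\<tau><..} - {0}"
    using \<tau> by (intro eventually_at_in_open) auto
  then have "\<forall>\<^sub>F h in at 0. rl2_scale (1 / h) (rl2_sub (y (\<tau> + h)) (y \<tau>)) \<in> RL2 a b m n"
    by (rule eventually_mono) (use y \<tau> in \<open>simp add: rl2_scale_closed rl2_sub_closed\<close>)
  ultimately show ?thesis
    using D by (simp add: rl2_tendsto_def)
qed

lemma pie_solution_mem: "pie_solution a b H T A B v x \<Longrightarrow> t \<ge> 0 \<Longrightarrow> x t \<in> H"
  and pie_solution_deriv:
    "pie_solution a b H T A B v x \<Longrightarrow> t \<ge> 0 \<Longrightarrow> has_rl2_deriv a b (\<lambda>\<tau>. T (x \<tau>)) (A (x t)) t"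
  and pie_solution_init: "pie_solution a b H T A B v x \<Longrightarrow> rl2_dist a b (T (x 0)) (B v) = 0"
  by (simp_all add: pie_solution_def rl2_C1_def) blast

lemma pie_solution_tendsto:
  assumes x: "pie_solution a b (RL2 a b m n) T A B v x" and \<tau>: "\<tau> \<ge> 0"
    and g: "(g \<longlongrightarrow> \<tau>) F" and g_nonneg: "\<forall>\<^sub>F h in F. g h \<ge> 0"
  shows "rl2_tendsto a b m n (\<lambda>h. x (g h)) (x \<tau>) F"
proof -
  obtain x' where "\<And>t. t \<ge> 0 \<Longrightarrow> x t \<in> RL2 a b m n \<and> x' t \<in> RL2 a b m n \<and> has_rl2_deriv a b x (x' t) t"
    using x unfolding pie_solution_def rl2_C1_def by blast
  then show ?thesis
    using \<tau> g g_nonneg by (intro has_rl2_deriv_imp_tendsto[where D = "x' \<tau>"]) auto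
qed

text \<open>Symmetry forces \<open>Q u - Q v\<close> and \<open>Q (u - v)\<close> to agree up to a null element,
  so the bound on \<open>Q\<close> carries over to differences.\<close>

lemma symmetric_bounded_imp_lipschitz:
  assumes Q_map: "\<And>u. u \<in> RL2 a b m n \<Longrightarrow> Q u \<in> RL2 a b m n"
    and Q_sym: "\<And>u v. u \<in> RL2 a b m n \<Longrightarrow> v \<in> RL2 a b m n \<Longrightarrow>
      rl2_inner a b (Q u) v = rl2_inner a b u (Q v)"
    and Q_bound: "\<And>u. u \<in> RL2 a b m n \<Longrightarrow> rl2_norm a b (Q u) \<le> K * rl2_norm a b u"
    and u: "u \<in> RL2 a b m n" and v: "v \<in> RL2 a b m n"
  shows "rl2_dist a b (Q u) (Q v) \<le> K * rl2_dist a b u v"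
proof -
  have uv: "rl2_sub u v \<in> RL2 a b m n" and Quv: "rl2_sub (Q u) (Q v) \<in> RL2 a b m n"
    using u v Q_map by (simp_all add: rl2_sub_closed)
  define d where "d = rl2_sub (rl2_sub (Q u) (Q v)) (Q (rl2_sub u v))"
  have d: "d \<in> RL2 a b m n"
    unfolding d_def using Quv Q_map[OF uv] by (rule rl2_sub_closed)
  have "rl2_inner a b d w = 0" if w: "w \<in> RL2 a b m n" for w
    using rl2_inner_diff_left[OF Quv Q_map[OF uv] w] rl2_inner_diff_left[OF Q_map[OF u] Q_map[OF v] w]
      rl2_inner_diff_left[OF u v Q_map[OF w]] Q_sym[OF u w] Q_sym[OF v w] Q_sym[OF uv w]
    by (simp add: d_def)
  then have "rl2_norm a b d = 0"
    using d by (simp add: rl2_norm_def)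
  then have "rl2_dist a b (Q u) (Q v) \<le> rl2_norm a b (Q (rl2_sub u v))"
    using rl2_norm_triangle[OF Quv Q_map[OF uv]] by (simp add: rl2_dist_def d_def)
  also have "\<dots> \<le> K * rl2_dist a b u v"
    unfolding rl2_dist_def by (rule Q_bound[OF uv])
  finally show ?thesis .
qed

lemma symmetric_quadratic_form_diff:
  assumes Q_map: "\<And>u. u \<in> RL2 a b m n \<Longrightarrow> Q u \<in> RL2 a b m n"
    and Q_sym: "\<And>u v. u \<in> RL2 a b m n \<Longrightarrow> v \<in> RL2 a b m n \<Longrightarrow>
      rl2_inner a b (Q u) v = rl2_inner a b u (Q v)"
    and u: "u \<in> RL2 a b m n" and v: "v \<in> RL2 a b m n"
  shows "rl2_inner a b (rl2_scale c (rl2_sub u v)) (Q u) + rl2_inner a b (Q v) (rl2_scale c (rl2_sub u v)) =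
    c * (rl2_inner a b u (Q u) - rl2_inner a b v (Q v))"
proof -
  have uv: "rl2_sub u v \<in> RL2 a b m n"
    using u v by (rule rl2_sub_closed)
  show ?thesis
    unfolding rl2_inner_scale_left[OF uv Q_map[OF u]] rl2_inner_scale_right[OF uv Q_map[OF v]]
      rl2_inner_diff_left[OF u v Q_map[OF u]] rl2_inner_diff_right[OF u v Q_map[OF v]]
      Q_sym[OF v u] Q_sym[OF v v]
    by (simp add: algebra_simps)
qed

lemma eventually_at_within_mem: "\<forall>\<^sub>F s in at r within S. s \<in> S"
  by (simp add: eventually_at_filter)

context
  fixes a b :: real and m n :: nat and Q :: "rl2 \<Rightarrow> rl2" and K :: real and y w :: "real \<Rightarrow> rl2"
  assumes Q_map: "\<And>u. u \<in> RL2 a b m n \<Longrightarrow> Q u \<in> RL2 a b m n"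
    and Q_sym: "\<And>u v. u \<in> RL2 a b m n \<Longrightarrow> v \<in> RL2 a b m n \<Longrightarrow>
      rl2_inner a b (Q u) v = rl2_inner a b u (Q v)"
    and Q_lip: "\<And>u v. u \<in> RL2 a b m n \<Longrightarrow> v \<in> RL2 a b m n \<Longrightarrow>
      rl2_dist a b (Q u) (Q v) \<le> K * rl2_dist a b u v"
    and y_mem: "\<And>s. s \<ge> 0 \<Longrightarrow> y s \<in> RL2 a b m n" and w_mem: "\<And>s. s \<ge> 0 \<Longrightarrow> w s \<in> RL2 a b m n"
    and y_deriv: "\<And>s. s \<ge> 0 \<Longrightarrow> has_rl2_deriv a b y (w s) s"
begin

lemma image_trajectory_tendsto:
  assumes "s \<ge> 0" "(g \<longlongrightarrow> s) F" "\<forall>\<^sub>F h in F. g h \<ge> 0"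
  shows "rl2_tendsto a b m n (\<lambda>h. Q (y (g h))) (Q (y s)) F"
  using rl2_tendsto_lipschitz[OF Q_map Q_lip
      has_rl2_deriv_imp_tendsto[OF y_mem w_mem[OF assms(1)] y_deriv[OF assms(1)] assms]] .

lemma quadratic_form_continuous_on: "continuous_on {0..t} (\<lambda>s. rl2_inner a b (y s) (Q (y s)))"
  unfolding continuous_on_def
proof
  fix r assume "r \<in> {0..t}"
  then have r: "r \<ge> 0"
    by simp
  have near: "\<forall>\<^sub>F s in at r within {0..t}. s \<ge> 0"
    using eventually_at_within_mem by (rule eventually_mono) simp
  have "rl2_tendsto a b m n (\<lambda>s. y s) (y r) (at r within {0..t})"
    using has_rl2_deriv_imp_tendsto[OF y_mem w_mem[OF r] y_deriv[OF r] r tendsto_ident_at near] .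
  moreover have "rl2_tendsto a b m n (\<lambda>s. Q (y s)) (Q (y r)) (at r within {0..t})"
    using image_trajectory_tendsto[OF r tendsto_ident_at near] .
  ultimately show "((\<lambda>s. rl2_inner a b (y s) (Q (y s))) \<longlongrightarrow> rl2_inner a b (y r) (Q (y r)))
      (at r within {0..t})"
    by (rule rl2_tendsto_inner)
qed

lemma quadratic_form_DERIV:
  assumes s: "s > 0"
  shows "DERIV (\<lambda>s. rl2_inner a b (y s) (Q (y s))) s :> 2 * rl2_inner a b (w s) (Q (y s))"
proof -
  let ?V = "\<lambda>s. rl2_inner a b (y s) (Q (y s))"
  let ?D = "\<lambda>h. rl2_scale (1 / h) (rl2_sub (y (s + h)) (y s))"
  have s0: "s \<ge> 0"
    using s by simp
  have near: "\<forall>\<^sub>F h in at 0. h \<in> {-s<..} - {0}"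
    using s by (intro eventually_at_in_open) auto
  then have "\<forall>\<^sub>F h in at 0. s + h \<ge> 0"
    by (rule eventually_mono) simp
  moreover have "((\<lambda>h. s + h) \<longlongrightarrow> s) (at 0)"
    using tendsto_add[OF tendsto_const tendsto_ident_at, of s 0 UNIV] by simp
  ultimately have Qy: "rl2_tendsto a b m n (\<lambda>h. Q (y (s + h))) (Q (y s)) (at 0)"
    using image_trajectory_tendsto[OF s0] by blast
  have D: "rl2_tendsto a b m n ?D (w s) (at 0)"
    by (rule has_rl2_deriv_quotient_tendsto[OF y_mem w_mem[OF s0] y_deriv[OF s0] s])
  have "((\<lambda>h. rl2_inner a b (?D h) (Q (y (s + h))) + rl2_inner a b (Q (y s)) (?D h)) \<longlongrightarrow>
      rl2_inner a b (w s) (Q (y s)) + rl2_inner a b (Q (y s)) (w s)) (at 0)"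
    by (intro tendsto_add rl2_tendsto_inner[OF D Qy]
        rl2_tendsto_inner[OF rl2_tendsto_const[OF Q_map[OF y_mem[OF s0]]] D])
  moreover have "\<forall>\<^sub>F h in at 0. rl2_inner a b (?D h) (Q (y (s + h))) + rl2_inner a b (Q (y s)) (?D h) =
      (?V (s + h) - ?V s) / h"
    using near
    by (rule eventually_mono)
      (use s in \<open>simp add: symmetric_quadratic_form_diff[OF Q_map Q_sym y_mem y_mem] divide_simps\<close>)
  ultimately have "((\<lambda>h. (?V (s + h) - ?V s) / h) \<longlongrightarrow>
      rl2_inner a b (w s) (Q (y s)) + rl2_inner a b (Q (y s)) (w s)) (at 0)"
    by (rule Lim_transform_eventually)
  then show ?thesis
    using rl2_inner_commute[OF Q_map[OF y_mem[OF s0]] w_mem[OF s0]] by (simp add: DERIV_def)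
qed

lemma lyapunov_nonincreasing:
  assumes dissipative: "\<And>s. s \<ge> 0 \<Longrightarrow> rl2_inner a b (w s) (Q (y s)) \<le> 0" and t: "t \<ge> 0"
  shows "rl2_inner a b (y t) (Q (y t)) \<le> rl2_inner a b (y 0) (Q (y 0))"
  using DERIV_nonpos_imp_decreasing_open[OF t _ quadratic_form_continuous_on]
    quadratic_form_DERIV dissipative by force

end

lemma is_adjoint_map: "is_adjoint a b H1 H2 F G \<Longrightarrow> v \<in> H2 \<Longrightarrow> G v \<in> H1"
  and is_adjoint_inner:
    "is_adjoint a b H1 H2 F G \<Longrightarrow> u \<in> H1 \<Longrightarrow> v \<in> H2 \<Longrightarrow> rl2_inner a b (F u) v = rl2_inner a b u (G v)"
  by (simp_all add: is_adjoint_def)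

locale pie_dynamics =
  fixes a b :: real and m n :: nat and T A Ts As :: "rl2 \<Rightarrow> rl2"
  assumes T_map: "\<And>u. u \<in> RL2 a b m n \<Longrightarrow> T u \<in> RL2 a b m n"
    and A_map: "\<And>u. u \<in> RL2 a b m n \<Longrightarrow> A u \<in> RL2 a b m n"
    and adj_T: "is_adjoint a b (RL2 a b m n) (RL2 a b m n) T Ts"
    and adj_A: "is_adjoint a b (RL2 a b m n) (RL2 a b m n) A As"
begin

context
  fixes B C :: "rl2 \<Rightarrow> rl2" and v w :: rl2 and x xd :: "real \<Rightarrow> rl2" and t :: real
  assumes x: "pie_solution a b (RL2 a b m n) T A B v x"
    and xd: "pie_solution a b (RL2 a b m n) Ts As C w xd"
begin

lemma T_trajectory_tendsto:
  assumes "r \<ge> 0" "(g \<longlongrightarrow> r) F" "\<forall>\<^sub>F h in F. g h \<ge> 0"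
  shows "rl2_tendsto a b m n (\<lambda>h. T (x (g h))) (T (x r)) F"
  using pie_solution_mem[OF x] assms
  by (intro has_rl2_deriv_imp_tendsto[where y = "\<lambda>s. T (x s)" and D = "A (x r)"]
      pie_solution_deriv[OF x] T_map A_map)

lemma pairing_continuous_on: "continuous_on {0..t} (\<lambda>r. rl2_inner a b (T (x r)) (xd (t - r)))"
  unfolding continuous_on_def
proof
  fix r assume r: "r \<in> {0..t}"
  have "\<forall>\<^sub>F s in at r within {0..t}. s \<ge> 0" and after: "\<forall>\<^sub>F s in at r within {0..t}. t - s \<ge> 0"
    using eventually_at_within_mem by (rule eventually_mono; simp)+
  then have "rl2_tendsto a b m n (\<lambda>s. T (x s)) (T (x r)) (at r within {0..t})"
    using r T_trajectory_tendsto[of r "\<lambda>s. s"] by simp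
  moreover have "rl2_tendsto a b m n (\<lambda>s. xd (t - s)) (xd (t - r)) (at r within {0..t})"
    using r by (intro pie_solution_tendsto[OF xd _ _ after] tendsto_intros) simp
  ultimately show "((\<lambda>r. rl2_inner a b (T (x r)) (xd (t - r))) \<longlongrightarrow>
      rl2_inner a b (T (x r)) (xd (t - r))) (at r within {0..t})"
    by (rule rl2_tendsto_inner)
qed

lemma pairing_difference_quotient:
  assumes h: "h \<noteq> 0" and r: "r \<ge> 0" "r + h \<ge> 0" "t - r - h \<ge> 0" "t - r \<ge> 0"
  shows "rl2_inner a b (rl2_scale (1 / h) (rl2_sub (T (x (r + h))) (T (x r)))) (xd (t - r - h)) -
      rl2_inner a b (rl2_scale (1 / - h) (rl2_sub (Ts (xd (t - r + - h))) (Ts (xd (t - r))))) (x r) =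
    (rl2_inner a b (T (x (r + h))) (xd (t - (r + h))) - rl2_inner a b (T (x r)) (xd (t - r))) / h"
proof -
  have shift: "t - r + - h = t - r - h"
    by simp
  note x_mem = pie_solution_mem[OF x] and xd_mem = pie_solution_mem[OF xd]
  note Tx = T_map[OF x_mem[OF r(2)]] T_map[OF x_mem[OF r(1)]]
    and xd_h = xd_mem[OF r(3)] xd_mem[OF r(4)]
  note Tsxd = is_adjoint_map[OF adj_T xd_h(1)] is_adjoint_map[OF adj_T xd_h(2)]
  have pair: "rl2_inner a b (Ts (xd s)) (x r) = rl2_inner a b (T (x r)) (xd s)" if "xd s \<in> RL2 a b m n" for s
    using is_adjoint_inner[OF adj_T x_mem[OF r(1)] that]
      rl2_inner_commute[OF x_mem[OF r(1)] is_adjoint_map[OF adj_T that]]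
    by simp
  show ?thesis
    unfolding shift rl2_inner_scale_left[OF rl2_sub_closed[OF Tx] xd_h(1)] rl2_inner_diff_left[OF Tx xd_h(1)]
      rl2_inner_scale_left[OF rl2_sub_closed[OF Tsxd] x_mem[OF r(1)]]
      rl2_inner_diff_left[OF Tsxd x_mem[OF r(1)]] pair[OF xd_h(1)] pair[OF xd_h(2)]
    using h by (simp add: diff_divide_distrib algebra_simps)
qed

text \<open>Differentiating \<open>T x\<close> produces \<open>A x\<close> and differentiating \<open>Ts xd\<close> produces \<open>As xd\<close>;
  the two contributions cancel because \<open>As\<close> is the adjoint of \<open>A\<close>.\<close>

lemma pairing_DERIV:
  assumes r: "0 < r" "r < t"
  shows "DERIV (\<lambda>r. rl2_inner a b (T (x r)) (xd (t - r))) r :> 0"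
proof -
  let ?D = "\<lambda>h. rl2_scale (1 / h) (rl2_sub (T (x (r + h))) (T (x r)))"
  let ?Dd = "\<lambda>h. rl2_scale (1 / h) (rl2_sub (Ts (xd (t - r + h))) (Ts (xd (t - r))))"
  note x_mem = pie_solution_mem[OF x] and xd_mem = pie_solution_mem[OF xd]
  have x_r: "x r \<in> RL2 a b m n" and xd_r: "xd (t - r) \<in> RL2 a b m n"
    using r x_mem xd_mem by simp_all
  have near: "\<forall>\<^sub>F h in at 0. h \<in> {-min r (t - r)<..<min r (t - r)} - {0}"
    using r by (intro eventually_at_in_open) auto
  have D: "rl2_tendsto a b m n ?D (A (x r)) (at 0)"
    using r x_mem by (intro has_rl2_deriv_quotient_tendsto[where y = "\<lambda>s. T (x s)"]
        pie_solution_deriv[OF x] T_map A_map) auto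
  have Dd: "rl2_tendsto a b m n (\<lambda>h. ?Dd (- h)) (As (xd (t - r))) (at 0)"
    using r xd_mem
    by (intro rl2_tendsto_mirror has_rl2_deriv_quotient_tendsto[where y = "\<lambda>s. Ts (xd s)"]
        pie_solution_deriv[OF xd] is_adjoint_map[OF adj_T] is_adjoint_map[OF adj_A]) auto
  have "\<forall>\<^sub>F h in at 0. t - r - h \<ge> 0"
    using near by (rule eventually_mono) auto
  moreover have "((\<lambda>h. t - r - h) \<longlongrightarrow> t - r) (at 0)"
    using tendsto_diff[OF tendsto_const tendsto_ident_at, of "t - r" 0 UNIV] by simp
  ultimately have xd_tendsto: "rl2_tendsto a b m n (\<lambda>h. xd (t - r - h)) (xd (t - r)) (at 0)"
    using r by (intro pie_solution_tendsto[OF xd]) auto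
  have "((\<lambda>h. rl2_inner a b (?D h) (xd (t - r - h)) - rl2_inner a b (?Dd (- h)) (x r)) \<longlongrightarrow>
      rl2_inner a b (A (x r)) (xd (t - r)) - rl2_inner a b (As (xd (t - r))) (x r)) (at 0)"
    by (intro tendsto_diff rl2_tendsto_inner[OF D xd_tendsto]
        rl2_tendsto_inner[OF Dd rl2_tendsto_const[OF x_r]])
  moreover have "rl2_inner a b (A (x r)) (xd (t - r)) = rl2_inner a b (As (xd (t - r))) (x r)"
    using is_adjoint_inner[OF adj_A x_r xd_r] rl2_inner_commute[OF x_r is_adjoint_map[OF adj_A xd_r]]
    by simp
  moreover have "\<forall>\<^sub>F h in at 0. rl2_inner a b (?D h) (xd (t - r - h)) - rl2_inner a b (?Dd (- h)) (x r) =
      (rl2_inner a b (T (x (r + h))) (xd (t - (r + h))) - rl2_inner a b (T (x r)) (xd (t - r))) / h"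
    using near by (rule eventually_mono) (rule pairing_difference_quotient; use r in auto)
  ultimately show ?thesis
    unfolding DERIV_def by (auto elim: Lim_transform_eventually)
qed

lemma pie_duality:
  assumes "t \<ge> 0"
  shows "rl2_inner a b (T (x t)) (xd 0) = rl2_inner a b (T (x 0)) (xd t)"
proof (cases "t = 0")
  case False
  with assms have "t > 0"
    by simp
  from DERIV_isconst_end[OF this pairing_continuous_on pairing_DERIV] show ?thesis
    by simp
qed simp

end

end

section \<open>Impulse-to-peak bounds\<close>

lemma is_adjoint_swap:
  assumes adj: "is_adjoint a b (RL2 a b m n) (RL2 a b m' n') F G"
    and F_map: "\<And>u. u \<in> RL2 a b m n \<Longrightarrow> F u \<in> RL2 a b m' n'"
  shows "is_adjoint a b (RL2 a b m' n') (RL2 a b m n) G F"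
proof -
  have "rl2_inner a b (G v) u = rl2_inner a b v (F u)"
    if "v \<in> RL2 a b m' n'" "u \<in> RL2 a b m n" for u v
    using is_adjoint_inner[OF adj that(2,1)] rl2_inner_commute[OF that(2) is_adjoint_map[OF adj that(1)]]
      rl2_inner_commute[OF F_map[OF that(2)] that(1)]
    by simp
  then show ?thesis
    using F_map by (simp add: is_adjoint_def)
qed

lemma op_psd_sym:
  "op_psd a b H Q \<Longrightarrow> u \<in> H \<Longrightarrow> v \<in> H \<Longrightarrow> rl2_inner a b (Q u) v = rl2_inner a b u (Q v)"
  by (simp add: op_psd_def)

lemma op_le_imp_inner_le:
  assumes "op_le a b (RL2 a b m n) P R" and h: "h \<in> RL2 a b m n"
    and "P h \<in> RL2 a b m n" "R h \<in> RL2 a b m n"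
  shows "rl2_inner a b h (P h) \<le> rl2_inner a b h (R h)"
proof -
  have "0 \<le> rl2_inner a b h (rl2_sub (R h) (P h))"
    using assms(1) h by (simp add: op_le_def op_psd_def)
  then show ?thesis
    using rl2_inner_diff_right[OF assms(4,3) h] by simp
qed

lemma quadratic_form_cong_dist_0:
  assumes Q_map: "\<And>u. u \<in> RL2 a b m n \<Longrightarrow> Q u \<in> RL2 a b m n"
    and Q_sym: "\<And>u v. u \<in> RL2 a b m n \<Longrightarrow> v \<in> RL2 a b m n \<Longrightarrow>
      rl2_inner a b (Q u) v = rl2_inner a b u (Q v)"
    and u: "u \<in> RL2 a b m n" and v: "v \<in> RL2 a b m n" and uv: "rl2_dist a b u v = 0"
  shows "rl2_inner a b u (Q u) = rl2_inner a b v (Q v)"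
proof -
  have "rl2_inner a b u (Q u) = rl2_inner a b v (Q u)"
    by (rule rl2_inner_cong_dist_0[OF u v Q_map[OF u] uv])
  also have "\<dots> = rl2_inner a b (Q v) u"
    using Q_sym[OF v u] rl2_inner_commute[OF v Q_map[OF u]] by simp
  also have "\<dots> = rl2_inner a b (Q v) v"
    using rl2_inner_cong_dist_0[OF u v Q_map[OF v] uv]
      rl2_inner_commute[OF u Q_map[OF v]] rl2_inner_commute[OF v Q_map[OF v]] by simp
  also have "\<dots> = rl2_inner a b v (Q v)"
    by (rule Q_sym[OF v v])
  finally show ?thesis .
qed

locale pie_system = pie_dynamics +
  fixes mv nv mz nz :: nat and B C Bs Cs :: "rl2 \<Rightarrow> rl2"
  assumes B_map: "\<And>v. v \<in> RL2 a b mv nv \<Longrightarrow> B v \<in> RL2 a b m n"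
    and C_map: "\<And>u. u \<in> RL2 a b m n \<Longrightarrow> C u \<in> RL2 a b mz nz"
    and adj_B: "is_adjoint a b (RL2 a b mv nv) (RL2 a b m n) B Bs"
    and adj_C: "is_adjoint a b (RL2 a b m n) (RL2 a b mz nz) C Cs"
begin

lemma dual: "pie_system a b m n Ts As T A mz nz mv nv Cs Bs C B"
  using is_adjoint_map[OF adj_T] is_adjoint_map[OF adj_A] is_adjoint_map[OF adj_B]
    is_adjoint_map[OF adj_C]
  by unfold_locales (simp_all add: is_adjoint_swap T_map A_map B_map C_map adj_T adj_A adj_B adj_C)

lemma dissipation_inner_le_0:
  assumes Q_map: "\<And>u. u \<in> RL2 a b m n \<Longrightarrow> Q u \<in> RL2 a b m n"
    and Q_sym: "\<And>u v. u \<in> RL2 a b m n \<Longrightarrow> v \<in> RL2 a b m n \<Longrightarrow>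
      rl2_inner a b (Q u) v = rl2_inner a b u (Q v)"
    and dissipative: "op_le a b (RL2 a b m n) (\<lambda>u. rl2_add (As (Q (T u))) (Ts (Q (A u)))) (op_zero m n)"
    and u: "u \<in> RL2 a b m n"
  shows "rl2_inner a b (A u) (Q (T u)) \<le> 0"
proof -
  note QTu = Q_map[OF T_map[OF u]] and QAu = Q_map[OF A_map[OF u]]
  have "rl2_inner a b u (rl2_add (As (Q (T u))) (Ts (Q (A u)))) \<le> rl2_inner a b u (op_zero m n u)"
    using u is_adjoint_map[OF adj_A QTu] is_adjoint_map[OF adj_T QAu]
    by (intro op_le_imp_inner_le[OF dissipative]) (simp_all add: rl2_add_closed op_zero_closed)
  moreover have "rl2_inner a b u (rl2_add (As (Q (T u))) (Ts (Q (A u)))) =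
      rl2_inner a b (A u) (Q (T u)) + rl2_inner a b (T u) (Q (A u))"
    using rl2_inner_add_right[OF is_adjoint_map[OF adj_A QTu] is_adjoint_map[OF adj_T QAu] u]
      is_adjoint_inner[OF adj_A u QTu] is_adjoint_inner[OF adj_T u QAu] by simp
  moreover have "rl2_inner a b (T u) (Q (A u)) = rl2_inner a b (A u) (Q (T u))"
    using Q_sym[OF T_map[OF u] A_map[OF u]] rl2_inner_commute[OF QTu A_map[OF u]] by simp
  ultimately show ?thesis
    using rl2_inner_op_zero_right[OF u] by simp
qed

lemma storage_le_input_energy:
  assumes Q_map: "\<And>u. u \<in> RL2 a b m n \<Longrightarrow> Q u \<in> RL2 a b m n"
    and Q_psd: "op_psd a b (RL2 a b m n) Q"
    and Q_bound: "\<And>u. u \<in> RL2 a b m n \<Longrightarrow> rl2_norm a b (Q u) \<le> K * rl2_norm a b u"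
    and input_ineq: "op_le a b (RL2 a b mv nv) (\<lambda>v. Bs (Q (B v))) (\<lambda>v. v)"
    and dissipative: "op_le a b (RL2 a b m n) (\<lambda>u. rl2_add (As (Q (T u))) (Ts (Q (A u)))) (op_zero m n)"
    and v: "v \<in> RL2 a b mv nv" and x: "pie_solution a b (RL2 a b m n) T A B v x" and t: "t \<ge> 0"
  shows "rl2_inner a b (T (x t)) (Q (T (x t))) \<le> (rl2_norm a b v)^2"
proof -
  note Q_sym = op_psd_sym[OF Q_psd]
  note x_mem = pie_solution_mem[OF x]
  have "rl2_inner a b (T (x t)) (Q (T (x t))) \<le> rl2_inner a b (T (x 0)) (Q (T (x 0)))"
    using x_mem t
    by (intro lyapunov_nonincreasing[where w = "\<lambda>s. A (x s)", OF Q_map Q_sym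
          symmetric_bounded_imp_lipschitz[OF Q_map Q_sym Q_bound]]
        T_map A_map pie_solution_deriv[OF x] dissipation_inner_le_0[OF Q_map Q_sym dissipative])
  also have "\<dots> = rl2_inner a b (B v) (Q (B v))"
    using x_mem[of 0] pie_solution_init[OF x]
    by (intro quadratic_form_cong_dist_0[OF Q_map Q_sym] T_map B_map v) auto
  also have "\<dots> = rl2_inner a b v (Bs (Q (B v)))"
    by (rule is_adjoint_inner[OF adj_B v Q_map[OF B_map[OF v]]])
  also have "\<dots> \<le> rl2_inner a b v v"
    using v is_adjoint_map[OF adj_B Q_map[OF B_map[OF v]]] by (intro op_le_imp_inner_le[OF input_ineq])
  finally show ?thesis
    by (simp add: rl2_norm_square)
qed

lemma output_bound:
  assumes Q_map: "\<And>u. u \<in> RL2 a b m n \<Longrightarrow> Q u \<in> RL2 a b m n"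
    and Q_psd: "op_psd a b (RL2 a b m n) Q"
    and Q_bound: "\<And>u. u \<in> RL2 a b m n \<Longrightarrow> rl2_norm a b (Q u) \<le> K * rl2_norm a b u"
    and input_ineq: "op_le a b (RL2 a b mv nv) (\<lambda>v. Bs (Q (B v))) (\<lambda>v. v)"
    and dissipative: "op_le a b (RL2 a b m n) (\<lambda>u. rl2_add (As (Q (T u))) (Ts (Q (A u)))) (op_zero m n)"
    and output_ineq: "op_le a b (RL2 a b m n) (\<lambda>u. rl2_scale (1 / \<gamma>^2) (Cs (C u))) (\<lambda>u. Ts (Q (T u)))"
    and \<gamma>: "\<gamma> > 0"
    and v: "v \<in> RL2 a b mv nv" and x: "pie_solution a b (RL2 a b m n) T A B v x" and t: "t \<ge> 0"
  shows "rl2_norm a b (C (x t)) \<le> \<gamma> * rl2_norm a b v"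
proof -
  have x_t: "x t \<in> RL2 a b m n"
    using pie_solution_mem[OF x t] .
  note Cx = C_map[OF x_t] and QTx = Q_map[OF T_map[OF x_t]]
  have "rl2_inner a b (x t) (rl2_scale (1 / \<gamma>^2) (Cs (C (x t)))) \<le> rl2_inner a b (x t) (Ts (Q (T (x t))))"
    using x_t is_adjoint_map[OF adj_C Cx] is_adjoint_map[OF adj_T QTx]
    by (intro op_le_imp_inner_le[OF output_ineq]) (simp_all add: rl2_scale_closed)
  then have "(rl2_norm a b (C (x t)))^2 / \<gamma>^2 \<le> rl2_inner a b (T (x t)) (Q (T (x t)))"
    using rl2_inner_scale_right[OF is_adjoint_map[OF adj_C Cx] x_t]
      is_adjoint_inner[OF adj_C x_t Cx] is_adjoint_inner[OF adj_T x_t QTx]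
    by (simp add: rl2_norm_square)
  then have "(rl2_norm a b (C (x t)))^2 \<le> \<gamma>^2 * rl2_inner a b (T (x t)) (Q (T (x t)))"
    using \<gamma> by (simp add: field_simps)
  also have "\<dots> \<le> \<gamma>^2 * (rl2_norm a b v)^2"
    using storage_le_input_energy[OF Q_map Q_psd Q_bound input_ineq dissipative v x t]
    by (simp add: mult_left_mono)
  finally have "(rl2_norm a b (C (x t)))^2 \<le> (\<gamma> * rl2_norm a b v)^2"
    by (simp add: power_mult_distrib)
  then show ?thesis
    by (rule power2_le_imp_le) (use \<gamma> rl2_norm_nonneg in simp)
qed

lemma output_duality:
  assumes v: "v \<in> RL2 a b mv nv" and x: "pie_solution a b (RL2 a b m n) T A B v x"
    and w: "w \<in> RL2 a b mz nz" and xd: "pie_solution a b (RL2 a b m n) Ts As Cs w xd"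
    and t: "t \<ge> 0"
  shows "rl2_inner a b (C (x t)) w = rl2_inner a b v (Bs (xd t))"
proof -
  have x_t: "x t \<in> RL2 a b m n" and x_0: "x 0 \<in> RL2 a b m n"
    and xd_t: "xd t \<in> RL2 a b m n" and xd_0: "xd 0 \<in> RL2 a b m n"
    using pie_solution_mem[OF x] pie_solution_mem[OF xd] t by auto
  have "rl2_inner a b (C (x t)) w = rl2_inner a b (Cs w) (x t)"
    using is_adjoint_inner[OF adj_C x_t w] rl2_inner_commute[OF x_t is_adjoint_map[OF adj_C w]] by simp
  also have "\<dots> = rl2_inner a b (Ts (xd 0)) (x t)"
    using pie_solution_init[OF xd] rl2_dist_self
    by (metis rl2_inner_cong_dist_0 is_adjoint_map[OF adj_T xd_0] is_adjoint_map[OF adj_C w] x_t)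
  also have "\<dots> = rl2_inner a b (T (x t)) (xd 0)"
    using is_adjoint_inner[OF adj_T x_t xd_0] rl2_inner_commute[OF x_t is_adjoint_map[OF adj_T xd_0]] by simp
  also have "\<dots> = rl2_inner a b (T (x 0)) (xd t)"
    by (rule pie_duality[OF x xd t])
  also have "\<dots> = rl2_inner a b (B v) (xd t)"
    by (rule rl2_inner_cong_dist_0[OF T_map[OF x_0] B_map[OF v] xd_t pie_solution_init[OF x]])
  also have "\<dots> = rl2_inner a b v (Bs (xd t))"
    by (rule is_adjoint_inner[OF adj_B v xd_t])
  finally show ?thesis .
qed

lemma output_bound_by_duality:
  assumes dual_exists: "\<And>w. w \<in> RL2 a b mz nz \<Longrightarrow> \<exists>xd. pie_solution a b (RL2 a b m n) Ts As Cs w xd"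
    and dual_bound: "\<And>w xd. w \<in> RL2 a b mz nz \<Longrightarrow> pie_solution a b (RL2 a b m n) Ts As Cs w xd \<Longrightarrow>
      rl2_norm a b (Bs (xd t)) \<le> \<gamma> * rl2_norm a b w"
    and \<gamma>: "\<gamma> \<ge> 0"
    and v: "v \<in> RL2 a b mv nv" and x: "pie_solution a b (RL2 a b m n) T A B v x" and t: "t \<ge> 0"
  shows "rl2_norm a b (C (x t)) \<le> \<gamma> * rl2_norm a b v"
proof -
  let ?z = "C (x t)"
  have z: "?z \<in> RL2 a b mz nz"
    using C_map pie_solution_mem[OF x t] .
  obtain xd where xd: "pie_solution a b (RL2 a b m n) Ts As Cs ?z xd"
    using dual_exists[OF z] ..
  have "(rl2_norm a b ?z)^2 = rl2_inner a b v (Bs (xd t))"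
    using output_duality[OF v x z xd t] by (simp add: rl2_norm_square)
  also have "\<dots> \<le> rl2_norm a b v * rl2_norm a b (Bs (xd t))"
    using rl2_inner_Cauchy_Schwarz[OF v is_adjoint_map[OF adj_B pie_solution_mem[OF xd t]]] by simp
  also have "\<dots> \<le> rl2_norm a b v * (\<gamma> * rl2_norm a b ?z)"
    using dual_bound[OF z xd] rl2_norm_nonneg by (rule mult_left_mono)
  finally have "rl2_norm a b ?z * rl2_norm a b ?z \<le> rl2_norm a b ?z * (\<gamma> * rl2_norm a b v)"
    by (simp add: power2_eq_square algebra_simps)
  then show ?thesis
    using rl2_norm_nonneg[of a b ?z] \<gamma> rl2_norm_nonneg[of a b v]
    by (cases "rl2_norm a b ?z = 0") (auto simp: mult_le_cancel_left)
qed

lemma peak_output_bound: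
  assumes Q_map: "\<And>u. u \<in> RL2 a b m n \<Longrightarrow> Q u \<in> RL2 a b m n"
    and Q_psd: "op_psd a b (RL2 a b m n) Q"
    and Q_bound: "\<And>u. u \<in> RL2 a b m n \<Longrightarrow> rl2_norm a b (Q u) \<le> K * rl2_norm a b u"
    and \<gamma>: "\<gamma> > 0"
    and dual_exists: "\<And>w. w \<in> RL2 a b mz nz \<Longrightarrow> \<exists>xd. pie_solution a b (RL2 a b m n) Ts As Cs w xd"
    and conds:
      "(op_le a b (RL2 a b mv nv) (\<lambda>v. Bs (Q (B v))) (\<lambda>v. v) \<and>
        op_le a b (RL2 a b m n) (\<lambda>u. rl2_add (As (Q (T u))) (Ts (Q (A u)))) (op_zero m n) \<and>
        op_le a b (RL2 a b m n) (\<lambda>u. rl2_scale (1 / \<gamma>^2) (Cs (C u))) (\<lambda>u. Ts (Q (T u))))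
       \<or>
       (op_le a b (RL2 a b mz nz) (\<lambda>w. C (Q (Cs w))) (\<lambda>w. w) \<and>
        op_le a b (RL2 a b m n) (\<lambda>u. rl2_add (A (Q (Ts u))) (T (Q (As u)))) (op_zero m n) \<and>
        op_le a b (RL2 a b m n) (\<lambda>u. rl2_scale (1 / \<gamma>^2) (B (Bs u))) (\<lambda>u. T (Q (Ts u))))"
    and v: "v \<in> RL2 a b mv nv" and x: "pie_solution a b (RL2 a b m n) T A B v x" and t: "t \<ge> 0"
  shows "rl2_norm a b (C (x t)) \<le> \<gamma> * rl2_norm a b v"
proof -
  interpret dual: pie_system a b m n Ts As T A mz nz mv nv Cs Bs C B
    by (rule dual)
  from conds show ?thesis
  proof (elim disjE conjE)
    assume "op_le a b (RL2 a b mv nv) (\<lambda>v. Bs (Q (B v))) (\<lambda>v. v)"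
      and "op_le a b (RL2 a b m n) (\<lambda>u. rl2_add (As (Q (T u))) (Ts (Q (A u)))) (op_zero m n)"
      and "op_le a b (RL2 a b m n) (\<lambda>u. rl2_scale (1 / \<gamma>^2) (Cs (C u))) (\<lambda>u. Ts (Q (T u)))"
    from output_bound[OF Q_map Q_psd Q_bound this \<gamma> v x t] show ?thesis .
  next
    assume "op_le a b (RL2 a b mz nz) (\<lambda>w. C (Q (Cs w))) (\<lambda>w. w)"
      and "op_le a b (RL2 a b m n) (\<lambda>u. rl2_add (A (Q (Ts u))) (T (Q (As u)))) (op_zero m n)"
      and "op_le a b (RL2 a b m n) (\<lambda>u. rl2_scale (1 / \<gamma>^2) (B (Bs u))) (\<lambda>u. T (Q (Ts u)))"
    from dual.output_bound[OF Q_map Q_psd Q_bound this \<gamma>] show ?thesis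
      using \<gamma> t by (intro output_bound_by_duality[OF dual_exists _ _ v x t]) auto
  qed
qed

end

theorem theorem2:
  fixes a b :: real and m n nw nz :: nat
    and T4 A4 B4 C4 Q4 :: pi4
    and Ts As Bs Cs :: "rl2 \<Rightarrow> rl2"
    and \<gamma> :: real
  defines "H \<equiv> RL2 a b m n" and "W \<equiv> RL2 a b nw 0" and "Z \<equiv> RL2 a b nz 0"
  defines "T \<equiv> pi_op a b T4" and "A \<equiv> pi_op a b A4" and "B \<equiv> pi_op a b B4"
      and "C \<equiv> pi_op a b C4" and "Q \<equiv> pi_op a b Q4"
  assumes ab: "a < b"
    and piT: "is_pi4 m n m n T4" and piA: "is_pi4 m n m n A4"
    and piB: "is_pi4 nw 0 m n B4" and piC: "is_pi4 m n nz 0 C4"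
    and adjT: "is_adjoint a b H H T Ts" and adjA: "is_adjoint a b H H A As"
    and adjB: "is_adjoint a b W H B Bs" and adjC: "is_adjoint a b H Z C Cs"
    and wp: "pie_well_posed a b H W T A B"
    and wp_dual: "pie_well_posed a b H Z Ts As Cs"
    and gamma_pos: "\<gamma> > 0"
    and piQ: "is_pi4 m n m n Q4"
    and Q_psd: "op_psd a b H Q"
    and conds:
      "(op_le a b W (\<lambda>v. Bs (Q (B v))) (\<lambda>v. v) \<and>
        op_le a b H (\<lambda>u. rl2_add (As (Q (T u))) (Ts (Q (A u)))) (op_zero m n) \<and>
        op_le a b H (\<lambda>u. rl2_scale (1 / \<gamma>^2) (Cs (C u))) (\<lambda>u. Ts (Q (T u))))
       \<or>
       (op_le a b Z (\<lambda>w. C (Q (Cs w))) (\<lambda>w. w) \<and>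
        op_le a b H (\<lambda>u. rl2_add (A (Q (Ts u))) (T (Q (As u)))) (op_zero m n) \<and>
        op_le a b H (\<lambda>u. rl2_scale (1 / \<gamma>^2) (B (Bs u))) (\<lambda>u. T (Q (Ts u))))"
  shows "ip_norm a b H W T A B C \<le> ereal \<gamma>"
proof -
  interpret pie_system a b m n T A Ts As nw 0 nz 0 B C Bs Cs
    using adjT adjA adjB adjC pi_op_closed[OF piT ab] pi_op_closed[OF piA ab]
      pi_op_closed[OF piB ab] pi_op_closed[OF piC ab]
    unfolding H_def W_def Z_def T_def A_def B_def C_def by unfold_locales auto
  have Q_map: "\<And>u. u \<in> RL2 a b m n \<Longrightarrow> Q u \<in> RL2 a b m n"
    unfolding Q_def by (rule pi_op_closed[OF piQ ab])
  obtain K where Q_bound: "\<And>u. u \<in> RL2 a b m n \<Longrightarrow> rl2_norm a b (Q u) \<le> K * rl2_norm a b u"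
    using pi_op_bounded[OF piQ ab] unfolding Q_def by blast
  have dual_exists: "\<And>w. w \<in> RL2 a b nz 0 \<Longrightarrow> \<exists>xd. pie_solution a b (RL2 a b m n) Ts As Cs w xd"
    using wp_dual unfolding pie_well_posed_def H_def Z_def by blast
  have "rl2_norm a b (C (x t)) \<le> \<gamma> * rl2_norm a b v"
    if "v \<in> W" "pie_solution a b H T A B v x" "t \<ge> 0" for v x t
    using peak_output_bound[OF Q_map Q_psd[unfolded H_def] Q_bound gamma_pos dual_exists
        conds[unfolded H_def W_def Z_def]] that
    unfolding H_def W_def by blast
  then show ?thesis
    unfolding ip_norm_def by (intro SUP_least) force
qed

end
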